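(* Let $A$ be a nontrivial closed class of decision tables from $\mathcal M_2^\infty$, $\psi$ a bounded complexity measure, suppose $\mathcal H^\infty_{\psi,A}$ is everywhere defined, and let $n\in\omega\setminus\{0\}$. Then $Z_{\psi,A}(n)$, $G_{\psi,A}(n)$, $L_{\psi,A}(n)$ are defined and $$\mathcal H^\infty_{\psi,A}(n)\le\max\bigl(n,\,nG_{\psi,A}(n)\bigr)\,Z_{\psi,A}(n)\,\log_2\bigl(4nL_{\psi,A}(n)\bigr).$$
   Context: Notation: $\omega=\{0,1,2,\dots\}$; $\mathcal P(\omega)$ is the set of nonempty finite subsets of $\omega$; $E_2=\{0,1\}$. $P=\{f_i:i\in\omega\}$ is a set of attributes, $f_i\neq f_j$ for $i\ne j$. Decision tables: $\mathcal M_2^\infty$ is the set of rectangular tables filled with numbers from $E_2$, whose columns are labeled with pairwise different attributes from $P$, whose rows are pairwise different, and each row of which is labeled with a set from $\mathcal P(\omega)$ (its set of decisions). The empty table (no rows) is denoted $\Lambda$ and belongs to $\mathcal M_2^\infty$. For $T\in\mathcal M_2^\infty$: $\Delta(T)$ is the set of rows; $\Pi(T)$ is the intersection of the decision sets of all rows (common decisions); $\mathrm{At}(T)$ is the set of attributes labeling columns; $N(T)$ is the number of rows. For nonempty $T$, $\Omega_2(T)$ is the set of finite words (including the empty word $\lambda$) over the alphabet $\{(f_i,\delta):f_i\in\mathrm{At}(T),\delta\in E_2\}$; for $\alpha=(f_{i_1},\delta_1)\cdots(f_{i_m},\delta_m)$, $T\alpha$ is the subtable of $T$ consisting of the rows having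 value $\delta_j$ in the column $f_{i_j}$ for all $j$, and $T\lambda=T$. Operations: for $D\subseteq\mathrm{At}(T)$, $I(D,T)$ is obtained from $T$ by deleting the columns labeled with attributes from $D$ and, in each group of rows coinciding on the remaining columns, keeping only the first row; $I(\mathrm{At}(T),T)=\Lambda$. For $\nu:E_2^{|\mathrm{At}(T)|}\to\mathcal P(\omega)$, $J(\nu,T)$ is obtained by replacing the decision set of each row $\bar\delta$ by $\nu(\bar\delta)$. $[T]=\{J(\nu,I(D,T)):D\subseteq\mathrm{At}(T),\ \nu:E_2^{|\mathrm{At}(T)\setminus D|}\to\mathcal P(\omega)\}$; for nonempty $A\subseteq\mathcal M_2^\infty$, $[A]=\bigcup_{T\in A}[T]$. $A$ is a closed class if $[A]=A$; nontrivial if it contains a nonempty table. Decision trees: a $2$-decision tree is a finite directed rooted tree with at least two nodes in which the root and the edges leaving the root are unlabeled, each terminal node is labeled with a decision from $\omega$, and each other node is labeled with an attribute from $P$, each edge leaving such a node being labeled with a number from $E_2$. $\mathrm{At}(\Gamma)$ is the set of attributes labeling nodes of $\Gamma$. For a complete path $\tau=v_1,d_1,\dots,v_m,d_m,v_{m+1}$ (from the root to a terminal node), $\pi(\tau)=\lambda$ if $m=1$, and otherwise $\pi(\tau)=(f_{i_2},\delta_2)\cdots(f_{i_m},\delta_m)$ where $v_j$ is labeled $f_{i_j}$ and $d_j$ is labeled $\delta_j$; $T(\tau)=T\pi(\tau)$. For $T\ne\Lambda$, a nondeterministic decision tree for $T$ is a $2$-decision tree $\Gamma$ with $\mathrm{At}(\Gamma)\subseteq\mathrm{At}(T)$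 such that every row of $T$ belongs to $T(\tau)$ for some complete path $\tau$, and for every complete path $\tau$ either $T(\tau)=\Lambda$ or the decision at the terminal node of $\tau$ belongs to $\Pi(T(\tau))$. A deterministic decision tree for $T$ is a nondeterministic decision tree for $T$ in which, additionally, exactly one edge leaves the root and the edges leaving any node that is neither the root nor terminal are labeled with pairwise different numbers. Complexity measures: a partially bounded complexity measure is a function $\psi:P^*\to\omega$ on finite words over $P$ such that for all words $\alpha_1,\alpha_2$: $\psi(\alpha_1)=0$ iff $\alpha_1=\lambda$; $\psi(\alpha_1)$ is invariant under permutation of letters; $\psi(\alpha_1)\le\psi(\alpha_1\alpha_2)$; $\psi(\alpha_1\alpha_2)\le\psi(\alpha_1)+\psi(\alpha_2)$. It is bounded if in addition $\psi(\alpha)\ge|\alpha|$ for all $\alpha$. $\psi$ is extended to words $(f_{i_1},\delta_1)\cdots(f_{i_m},\delta_m)$ by $\psi(f_{i_1}\cdots f_{i_m})$ ($\psi(\lambda)=0$). For a $2$-decision tree $\Gamma$, $\psi(\Gamma)=\max_\tau\psi(\pi(\tau))$ over complete paths. For $T\ne\Lambda$, $\psi^d(T)$ (resp. $\psi^a(T)$) is the minimum of $\psi(\Gamma)$ over deterministic (resp. nondeterministic) decision trees $\Gamma$ for $T$; $\psi^d(\Lambda)=\psi^a(\Lambda)=0$. Parameters: $m_\psi(T)=\max\{\psi(f_i):f_i\in\mathrm{At}(T)\}$, $m_\psi(\Lambda)=0$. A table $Q\in\mathcal M_2^\infty$ is complete if $N(Q)=2^{|\mathrm{At}(Q)|}$;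 $Z(T)$ is the maximum number of columns of a complete table in $[T]$ if such tables exist, and $0$ otherwise; $Z(\Lambda)=0$. A word $\alpha\in\Omega_2(T)$ is annihilating for $T$ if $T\alpha=\Lambda$ and $\alpha$ contains no two letters $(f_i,\delta),(f_i,\sigma)$ with $\delta\ne\sigma$; it is irreducible if no word obtained from $\alpha$ by deleting some (at least one) letters is annihilating; $G(T)$ is the maximum length of an irreducible annihilating word for $T$ if one exists, and $0$ otherwise; $G(\Lambda)=0$. For $T\ne\Lambda$, $n\in\omega$: $\Omega_2^n(T)=\{\alpha\in\Omega_2(T):\psi(\alpha)\le n\}$; a finite $U\subseteq\Omega_2^n(T)$ is a $(\psi,n)$-cover of $T$ if $\bigcup_{\alpha\in U}\Delta(T\alpha)=\Delta(T)$, irreducible if no proper subset is a $(\psi,n)$-cover; $l_\psi(T,n)$ is the maximum cardinality of an irreducible $(\psi,n)$-cover of $T$; $l_\psi(\Lambda,n)=0$. Class functions ($n\in\omega$): $A_\psi(n)=\{T\in A:m_\psi(T)\le n\}$. $Z_{\psi,A}(n)$ is undefined if $\{Z(T):T\in A_\psi(n)\}$ is infinite, else its maximum; $G_{\psi,A}(n)$ is undefined if $\{G(T):T\in A_\psi(n)\}$ is infinite, else its maximum; $L_{\psi,A}(n)$ is undefined if $\{l_\psi(T,n):T\in A\}$ is infinite, else its maximum; $\mathcal H^\infty_{\psi,A}(n)$ is undefined if $\{\psi^d(T):T\in A,\psi^a(T)\le n\}$ is infinite, else its maximum. *)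

theory Defs
  imports Complex_Main "HOL-Library.Multiset"
begin

text \<open>Attribute f_i is represented by its index i :: nat; the value set E_2 = {0,1}
  is represented by bool (False = 0, True = 1). A table is the list of its column
  attributes (left to right) together with the list of its rows (top to bottom),
  each row being a tuple of values with its decision set.\<close>

type_synonym row = "bool list"
type_synonym dtable = "nat list \<times> (row \<times> nat set) list"

definition wf_table :: "dtable \<Rightarrow> bool" where
  "wf_table T \<longleftrightarrow> distinct (fst T) \<and> distinct (map fst (snd T))
     \<and> (\<forall>(r, D) \<in> set (snd T). length r = length (fst T) \<and> D \<noteq> {} \<and> finite D)
     \<and> (snd T = [] \<longrightarrow> fst T = [])"

definition Lam :: dtable where "Lam = ([], [])"

definition is_empty :: "dtable \<Rightarrow> bool" where "is_empty T \<longleftrightarrow> snd T = []"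

definition atts :: "dtable \<Rightarrow> nat set" where "atts T = set (fst T)"

definition Delta :: "dtable \<Rightarrow> row set" where "Delta T = set (map fst (snd T))"

definition PiT :: "dtable \<Rightarrow> nat set" where "PiT T = \<Inter> (set (map snd (snd T)))"

definition Nrows :: "dtable \<Rightarrow> nat" where "Nrows T = length (snd T)"

definition val :: "nat list \<Rightarrow> row \<Rightarrow> nat \<Rightarrow> bool" where
  "val cs r f = the (map_of (zip cs r) f)"

definition sub :: "dtable \<Rightarrow> (nat \<times> bool) list \<Rightarrow> dtable" where
  "sub T \<alpha> = (fst T, filter (\<lambda>(r, _). \<forall>(f, \<delta>) \<in> set \<alpha>. val (fst T) r f = \<delta>) (snd T))"

definition words :: "dtable \<Rightarrow> (nat \<times> bool) list set" where
  "words T = {\<alpha>. set (map fst \<alpha>) \<subseteq> atts T}"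

definition I_op :: "nat set \<Rightarrow> dtable \<Rightarrow> dtable" where
  "I_op D T = (if atts T \<subseteq> D then Lam else
     (let cs = fst T;
          keep = filter (\<lambda>i. cs ! i \<notin> D) [0..<length cs];
          proj = (\<lambda>r. map (\<lambda>i. r ! i) keep);
          keys = rev (remdups (rev (map (proj \<circ> fst) (snd T))))
      in (map (\<lambda>i. cs ! i) keep,
          map (\<lambda>k. (k, snd (hd (filter (\<lambda>x. proj (fst x) = k) (snd T))))) keys)))"

definition J_op :: "(row \<Rightarrow> nat set) \<Rightarrow> dtable \<Rightarrow> dtable" where
  "J_op \<nu> T = (fst T, map (\<lambda>x. (fst x, \<nu> (fst x))) (snd T))"

definition tclosure :: "dtable \<Rightarrow> dtable set" where
  "tclosure T = {J_op \<nu> (I_op D T) | D \<nu>. D \<subseteq> atts T \<and>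
      (\<forall>r. length r = card (atts T - D) \<longrightarrow> \<nu> r \<noteq> {} \<and> finite (\<nu> r))}"

definition cclosure :: "dtable set \<Rightarrow> dtable set" where
  "cclosure A = (\<Union>T\<in>A. tclosure T)"

definition closed_class :: "dtable set \<Rightarrow> bool" where
  "closed_class A \<longleftrightarrow> A \<noteq> {} \<and> A \<subseteq> {T. wf_table T} \<and> cclosure A = A"

definition nontrivial :: "dtable set \<Rightarrow> bool" where
  "nontrivial A \<longleftrightarrow> (\<exists>T\<in>A. \<not> is_empty T)"

text \<open>A 2-decision tree is represented by the (nonempty) list of subtrees hanging below
  the unlabeled root.\<close>

datatype dtree = Leaf nat | Node nat "(bool \<times> dtree) list"

inductive wf_dt :: "dtree \<Rightarrow> bool" where
  "wf_dt (Leaf d)"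
| "ch \<noteq> [] \<Longrightarrow> (\<And>p. p \<in> set ch \<Longrightarrow> wf_dt (snd p)) \<Longrightarrow> wf_dt (Node f ch)"

inductive det_dt :: "dtree \<Rightarrow> bool" where
  "det_dt (Leaf d)"
| "distinct (map fst ch) \<Longrightarrow> (\<And>p. p \<in> set ch \<Longrightarrow> det_dt (snd p)) \<Longrightarrow> det_dt (Node f ch)"

inductive dpath :: "dtree \<Rightarrow> (nat \<times> bool) list \<Rightarrow> nat \<Rightarrow> bool" where
  "dpath (Leaf d) [] d"
| "(\<delta>, t) \<in> set ch \<Longrightarrow> dpath t w d \<Longrightarrow> dpath (Node f ch) ((f, \<delta>) # w) d"

inductive att_in :: "dtree \<Rightarrow> nat \<Rightarrow> bool" where
  "att_in (Node f ch) f"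
| "p \<in> set ch \<Longrightarrow> att_in (snd p) g \<Longrightarrow> att_in (Node f ch) g"

definition tree_atts :: "dtree list \<Rightarrow> nat set" where
  "tree_atts \<Gamma> = {f. \<exists>t\<in>set \<Gamma>. att_in t f}"

definition cpath :: "dtree list \<Rightarrow> (nat \<times> bool) list \<Rightarrow> nat \<Rightarrow> bool" where
  "cpath \<Gamma> w d \<longleftrightarrow> (\<exists>t\<in>set \<Gamma>. dpath t w d)"

definition two_tree :: "dtree list \<Rightarrow> bool" where
  "two_tree \<Gamma> \<longleftrightarrow> \<Gamma> \<noteq> [] \<and> (\<forall>t\<in>set \<Gamma>. wf_dt t)"

definition nd_tree :: "dtable \<Rightarrow> dtree list \<Rightarrow> bool" where
  "nd_tree T \<Gamma> \<longleftrightarrow> two_tree \<Gamma> \<and> tree_atts \<Gamma> \<subseteq> atts T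
     \<and> (\<forall>r\<in>Delta T. \<exists>w d. cpath \<Gamma> w d \<and> r \<in> Delta (sub T w))
     \<and> (\<forall>w d. cpath \<Gamma> w d \<longrightarrow> is_empty (sub T w) \<or> d \<in> PiT (sub T w))"

definition det_tree :: "dtable \<Rightarrow> dtree list \<Rightarrow> bool" where
  "det_tree T \<Gamma> \<longleftrightarrow> nd_tree T \<Gamma> \<and> length \<Gamma> = 1 \<and> (\<forall>t\<in>set \<Gamma>. det_dt t)"

definition partially_bounded_cm :: "(nat list \<Rightarrow> nat) \<Rightarrow> bool" where
  "partially_bounded_cm \<psi> \<longleftrightarrow>
     (\<forall>a. \<psi> a = 0 \<longleftrightarrow> a = [])
   \<and> (\<forall>a b. mset a = mset b \<longrightarrow> \<psi> a = \<psi> b)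
   \<and> (\<forall>a b. \<psi> a \<le> \<psi> (a @ b))
   \<and> (\<forall>a b. \<psi> (a @ b) \<le> \<psi> a + \<psi> b)"

definition bounded_cm :: "(nat list \<Rightarrow> nat) \<Rightarrow> bool" where
  "bounded_cm \<psi> \<longleftrightarrow> partially_bounded_cm \<psi> \<and> (\<forall>a. length a \<le> \<psi> a)"

definition psiw :: "(nat list \<Rightarrow> nat) \<Rightarrow> (nat \<times> bool) list \<Rightarrow> nat" where
  "psiw \<psi> \<alpha> = \<psi> (map fst \<alpha>)"

definition psi_tree :: "(nat list \<Rightarrow> nat) \<Rightarrow> dtree list \<Rightarrow> nat" where
  "psi_tree \<psi> \<Gamma> = Max {psiw \<psi> w | w d. cpath \<Gamma> w d}"

definition psi_d :: "(nat list \<Rightarrow> nat) \<Rightarrow> dtable \<Rightarrow> nat" where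
  "psi_d \<psi> T = (if is_empty T then 0 else Inf {psi_tree \<psi> \<Gamma> | \<Gamma>. det_tree T \<Gamma>})"

definition psi_a :: "(nat list \<Rightarrow> nat) \<Rightarrow> dtable \<Rightarrow> nat" where
  "psi_a \<psi> T = (if is_empty T then 0 else Inf {psi_tree \<psi> \<Gamma> | \<Gamma>. nd_tree T \<Gamma>})"

definition m_psi :: "(nat list \<Rightarrow> nat) \<Rightarrow> dtable \<Rightarrow> nat" where
  "m_psi \<psi> T = Max (insert 0 ((\<lambda>f. \<psi> [f]) ` atts T))"

definition complete_table :: "dtable \<Rightarrow> bool" where
  "complete_table Q \<longleftrightarrow> Nrows Q = 2 ^ card (atts Q)"

definition Zt :: "dtable \<Rightarrow> nat" where
  "Zt T = Max (insert 0 {card (atts Q) | Q. Q \<in> tclosure T \<and> complete_table Q})"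

definition annihilating :: "dtable \<Rightarrow> (nat \<times> bool) list \<Rightarrow> bool" where
  "annihilating T \<alpha> \<longleftrightarrow> \<alpha> \<in> words T \<and> is_empty (sub T \<alpha>)
     \<and> \<not> (\<exists>f \<delta> \<sigma>. (f, \<delta>) \<in> set \<alpha> \<and> (f, \<sigma>) \<in> set \<alpha> \<and> \<delta> \<noteq> \<sigma>)"

definition irr_annihilating :: "dtable \<Rightarrow> (nat \<times> bool) list \<Rightarrow> bool" where
  "irr_annihilating T \<alpha> \<longleftrightarrow> annihilating T \<alpha>
     \<and> \<not> (\<exists>I. I \<subset> {..<length \<alpha>} \<and> annihilating T (nths \<alpha> I))"

definition Gt :: "dtable \<Rightarrow> nat" where
  "Gt T = (if is_empty T then 0 else Max (insert 0 {length \<alpha> | \<alpha>. irr_annihilating T \<alpha>}))"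

definition psi_cover :: "(nat list \<Rightarrow> nat) \<Rightarrow> dtable \<Rightarrow> nat \<Rightarrow> (nat \<times> bool) list set \<Rightarrow> bool" where
  "psi_cover \<psi> T n U \<longleftrightarrow> finite U \<and> U \<subseteq> {\<alpha> \<in> words T. psiw \<psi> \<alpha> \<le> n}
     \<and> (\<Union>\<alpha>\<in>U. Delta (sub T \<alpha>)) = Delta T"

definition irr_psi_cover :: "(nat list \<Rightarrow> nat) \<Rightarrow> dtable \<Rightarrow> nat \<Rightarrow> (nat \<times> bool) list set \<Rightarrow> bool" where
  "irr_psi_cover \<psi> T n U \<longleftrightarrow> psi_cover \<psi> T n U \<and> (\<forall>V. V \<subset> U \<longrightarrow> \<not> psi_cover \<psi> T n V)"

definition l_psi :: "(nat list \<Rightarrow> nat) \<Rightarrow> dtable \<Rightarrow> nat \<Rightarrow> nat" where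
  "l_psi \<psi> T n = (if is_empty T then 0 else Max {card U | U. irr_psi_cover \<psi> T n U})"

section \<open>Class functions (None = undefined)\<close>

definition max_if_finite :: "nat set \<Rightarrow> nat option" where
  "max_if_finite S = (if finite S then Some (Max S) else None)"

definition A_psi :: "(nat list \<Rightarrow> nat) \<Rightarrow> dtable set \<Rightarrow> nat \<Rightarrow> dtable set" where
  "A_psi \<psi> A n = {T \<in> A. m_psi \<psi> T \<le> n}"

definition Z_class :: "(nat list \<Rightarrow> nat) \<Rightarrow> dtable set \<Rightarrow> nat \<Rightarrow> nat option" where
  "Z_class \<psi> A n = max_if_finite (Zt ` A_psi \<psi> A n)"

definition G_class :: "(nat list \<Rightarrow> nat) \<Rightarrow> dtable set \<Rightarrow> nat \<Rightarrow> nat option" where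
  "G_class \<psi> A n = max_if_finite (Gt ` A_psi \<psi> A n)"

definition L_class :: "(nat list \<Rightarrow> nat) \<Rightarrow> dtable set \<Rightarrow> nat \<Rightarrow> nat option" where
  "L_class \<psi> A n = max_if_finite ((\<lambda>T. l_psi \<psi> T n) ` A)"

definition H_class :: "(nat list \<Rightarrow> nat) \<Rightarrow> dtable set \<Rightarrow> nat \<Rightarrow> nat option" where
  "H_class \<psi> A n = max_if_finite (psi_d \<psi> ` {T \<in> A. psi_a \<psi> T \<le> n})"

end

theory Submission
  imports Defs "HOL-Library.Sublist"
begin

text \<open>
  Let W be a finite family of words of cost at most c covering the rows of a table T,
  and call a word of W essential if some row satisfies no other word of W. Relabelling every row
  with the names of the words it satisfies gives a table of the class with a nondeterministic tree of
  complexity at most c (one chain per word), whereas a deterministic tree must send the witness rows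
  of different essential words to different leaves. Hence 2 to the deterministic complexity is at
  least the number of essential words. Irreducible covers, the negated letters of an irreducible
  annihilating word and the words x_i = 0 x_(i+1) = 1 in a complete table consist of essential words,
  so if the deterministic complexity is bounded on tables of bounded nondeterministic complexity,
  then L, G and Z are bounded.

  An optimal nondeterministic tree for T with complexity at most n yields an irreducible
  cover U by at most L words of cost at most n, which mention a set C of at most n L attributes.
  A set of attributes shattered by the restrictions of the rows of T to C carries a complete table
  of the class, so it has at most Z elements, and by Pajor's form of the Sauer-Shelah lemma there
  are at most (n L + 1)^Z such restrictions. A deterministic tree follows the majority value of every
  attribute along a word of cost at most max(n, n G) -- a word of U, or an irreducible annihilating
  word of length at most G refuting a pattern no row has; every deviation from the majority at
  least halves the number of remaining patterns. This gives complexity at most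
  max(n, n G) Z log_2 (4 n L).
\<close>

definition sat :: "nat list \<Rightarrow> row \<Rightarrow> (nat \<times> bool) list \<Rightarrow> bool" where
  "sat cs r w \<longleftrightarrow> (\<forall>(f, \<delta>) \<in> set w. val cs r f = \<delta>)"

lemma sat_append [simp]: "sat cs r (a @ b) \<longleftrightarrow> sat cs r a \<and> sat cs r b"
  by (auto simp: sat_def)

lemma sat_Cons [simp]: "sat cs r ((f, \<delta>) # b) \<longleftrightarrow> val cs r f = \<delta> \<and> sat cs r b"
  by (auto simp: sat_def)

lemma sat_Nil [simp]: "sat cs r []"
  by (simp add: sat_def)

lemma fst_sub [simp]: "fst (sub T w) = fst T"
  by (simp add: sub_def)

lemma Delta_sub: "Delta (sub T w) = {r \<in> Delta T. sat (fst T) r w}"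
  by (auto simp: Delta_def sub_def sat_def intro!: rev_image_eqI)

lemma finite_Delta [simp]: "finite (Delta T)"
  by (simp add: Delta_def)

lemma finite_atts [simp]: "finite (atts T)"
  by (simp add: atts_def)

lemma is_empty_iff: "is_empty T \<longleftrightarrow> Delta T = {}"
  unfolding is_empty_def Delta_def by auto

lemma mem_PiT_sub: "x \<in> PiT (sub T w) \<longleftrightarrow> (\<forall>(r, D) \<in> set (snd T). sat (fst T) r w \<longrightarrow> x \<in> D)"
  by (auto simp: PiT_def sub_def sat_def)

lemma PiT_sub_mono:
  assumes "\<And>r. r \<in> Delta T \<Longrightarrow> sat (fst T) r v \<Longrightarrow> sat (fst T) r w"
    and "x \<in> PiT (sub T w)"
  shows "x \<in> PiT (sub T v)"
  using assms unfolding mem_PiT_sub Delta_def by fastforce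

lemma wf_tableD:
  assumes "wf_table T"
  shows "distinct (fst T)" "distinct (map fst (snd T))"
    "\<And>r D. (r, D) \<in> set (snd T) \<Longrightarrow> length r = length (fst T) \<and> D \<noteq> {} \<and> finite D"
  using assms unfolding wf_table_def by auto

lemma length_Delta: "wf_table T \<Longrightarrow> r \<in> Delta T \<Longrightarrow> length r = length (fst T)"
  unfolding Delta_def using wf_tableD(3) by force

lemma Nrows_eq_card_Delta: "wf_table T \<Longrightarrow> Nrows T = card (Delta T)"
  using wf_tableD(2) unfolding Nrows_def Delta_def by (metis distinct_card length_map)

lemma card_atts: "wf_table T \<Longrightarrow> card (atts T) = length (fst T)"
  using wf_tableD(1) by (simp add: atts_def distinct_card)

lemma val_nth:
  assumes "distinct cs" "length r = length cs" "i < length cs"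
  shows "val cs r (cs ! i) = r ! i"
  using assms by (simp add: val_def map_of_zip_nth)

definition kept_cols :: "nat list \<Rightarrow> nat set \<Rightarrow> nat list" where
  "kept_cols cs D = filter (\<lambda>i. cs ! i \<notin> D) [0..<length cs]"

definition proj_row :: "nat list \<Rightarrow> nat set \<Rightarrow> row \<Rightarrow> row" where
  "proj_row cs D r = map (\<lambda>i. r ! i) (kept_cols cs D)"

lemma I_op_eq:
  assumes "\<not> atts T \<subseteq> D"
  shows "I_op D T = (map (\<lambda>i. fst T ! i) (kept_cols (fst T) D),
      map (\<lambda>k. (k, snd (hd (filter (\<lambda>x. proj_row (fst T) D (fst x) = k) (snd T)))))
        (rev (remdups (rev (map (proj_row (fst T) D \<circ> fst) (snd T))))))"
  using assms unfolding I_op_def kept_cols_def proj_row_def Let_def by simp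

lemma I_op_all_atts: "atts T \<subseteq> D \<Longrightarrow> I_op D T = Lam"
  by (simp add: I_op_def)

lemma atts_I_op: "atts (I_op D T) = atts T - D"
proof (cases "atts T \<subseteq> D")
  case True
  then show ?thesis by (auto simp: I_op_all_atts Lam_def atts_def)
next
  case False
  have "(!) cs ` set (kept_cols cs D) = set cs - D" for cs
    unfolding kept_cols_def by (auto simp: in_set_conv_nth)
  with False show ?thesis by (simp add: I_op_eq atts_def image_image)
qed

lemma Delta_I_op: "\<not> atts T \<subseteq> D \<Longrightarrow> Delta (I_op D T) = proj_row (fst T) D ` Delta T"
  by (simp add: I_op_eq Delta_def image_image o_def)

lemma val_proj_row:
  assumes "distinct (fst T)" "length r = length (fst T)" "f \<in> atts T" "f \<notin> D"
  shows "val (map (\<lambda>i. fst T ! i) (kept_cols (fst T) D)) (proj_row (fst T) D r) f = val (fst T) r f"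
proof -
  let ?cs = "fst T" and ?ks = "kept_cols (fst T) D"
  obtain i where i: "i < length ?cs" "?cs ! i = f"
    using assms(3) by (auto simp: atts_def in_set_conv_nth)
  have "i \<in> set ?ks" using i assms(4) by (auto simp: kept_cols_def)
  then obtain j where j: "j < length ?ks" "?ks ! j = i" by (auto simp: in_set_conv_nth)
  have "distinct (map (\<lambda>i. ?cs ! i) ?ks)"
    using assms(1) by (auto simp: kept_cols_def distinct_map inj_on_def nth_eq_iff_index_eq)
  then have "val (map (\<lambda>i. ?cs ! i) ?ks) (proj_row ?cs D r) (map (\<lambda>i. ?cs ! i) ?ks ! j)
      = proj_row ?cs D r ! j"
    by (rule val_nth) (use j in \<open>auto simp: proj_row_def\<close>)
  also have "\<dots> = r ! i" using j by (simp add: proj_row_def)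
  also have "\<dots> = val ?cs r f" using val_nth[OF assms(1,2) i(1)] i by simp
  finally show ?thesis using j i by simp
qed

lemma fst_J_op [simp]: "fst (J_op \<nu> T) = fst T"
  by (simp add: J_op_def)

lemma atts_J_op [simp]: "atts (J_op \<nu> T) = atts T"
  by (simp add: atts_def)

lemma Delta_J_op [simp]: "Delta (J_op \<nu> T) = Delta T"
  by (simp add: J_op_def Delta_def o_def)

lemma is_empty_J_op [simp]: "is_empty (J_op \<nu> T) \<longleftrightarrow> is_empty T"
  by (simp add: is_empty_iff)

lemma is_empty_Lam [simp]: "is_empty Lam"
  by (simp add: is_empty_def Lam_def)

lemma J_op_Lam [simp]: "J_op \<nu> Lam = Lam"
  by (simp add: J_op_def Lam_def)

lemma mem_PiT_sub_J_op:
  "x \<in> PiT (sub (J_op \<nu> T) w) \<longleftrightarrow> (\<forall>r \<in> Delta T. sat (fst T) r w \<longrightarrow> x \<in> \<nu> r)"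
  unfolding mem_PiT_sub by (auto simp: J_op_def Delta_def)

lemma filter_fst_unique:
  "distinct (map fst xs) \<Longrightarrow> x \<in> set xs \<Longrightarrow> filter (\<lambda>y. fst y = fst x) xs = [x]"
proof (induction xs)
  case (Cons a xs)
  show ?case
  proof (cases "a = x")
    case True
    with Cons.prems have "\<forall>y\<in>set xs. fst y \<noteq> fst x" by (auto simp: image_iff)
    with True show ?thesis by (simp add: filter_empty_conv)
  next
    case False
    with Cons.prems have "x \<in> set xs" "fst a \<noteq> fst x" by (auto simp: image_iff)
    with Cons show ?thesis by simp
  qed
qed simp

lemma I_op_empty:
  assumes "wf_table T" "fst T \<noteq> []"
  shows "I_op {} T = T"
proof -
  note wf = wf_tableD[OF assms(1)]
  have ks: "kept_cols (fst T) {} = [0..<length (fst T)]" by (simp add: kept_cols_def)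
  have proj: "proj_row (fst T) {} (fst x) = fst x" if "x \<in> set (snd T)" for x
    using wf(3)[of "fst x" "snd x"] that ks by (simp add: proj_row_def) (metis map_nth)
  have proj_map: "map (proj_row (fst T) {} \<circ> fst) (snd T) = map fst (snd T)"
    using proj by simp
  have keys: "rev (remdups (rev (map (proj_row (fst T) {} \<circ> fst) (snd T)))) = map fst (snd T)"
    using wf(2) by (simp add: proj_map distinct_remdups_id)
  have "filter (\<lambda>y. proj_row (fst T) {} (fst y) = fst x) (snd T) = [x]" if "x \<in> set (snd T)" for x
    using filter_fst_unique[OF wf(2) that] proj by (metis (no_types, lifting) filter_cong)
  then have "map (\<lambda>k. (k, snd (hd (filter (\<lambda>x. proj_row (fst T) {} (fst x) = k) (snd T)))))
      (map fst (snd T)) = snd T"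
    by (simp add: map_idI)
  moreover have "map (\<lambda>i. fst T ! i) (kept_cols (fst T) {}) = fst T"
    using ks by (simp add: map_nth)
  moreover have "\<not> atts T \<subseteq> {}" using assms(2) by (auto simp: atts_def)
  ultimately show ?thesis using I_op_eq keys by (simp add: prod_eq_iff)
qed

lemma J_op_id:
  assumes "\<And>r D. (r, D) \<in> set (snd T) \<Longrightarrow> \<nu> r = D"
  shows "J_op \<nu> T = T"
  using assms by (cases T) (auto simp: J_op_def intro: map_idI)

lemma closed_class_wf: "closed_class A \<Longrightarrow> T \<in> A \<Longrightarrow> wf_table T"
  unfolding closed_class_def by auto

lemma closed_class_J_op_I_op:
  assumes "closed_class A" "T \<in> A" "D \<subseteq> atts T"
    "\<And>r. length r = card (atts T - D) \<Longrightarrow> \<nu> r \<noteq> {} \<and> finite (\<nu> r)"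
  shows "J_op \<nu> (I_op D T) \<in> A"
proof -
  have "J_op \<nu> (I_op D T) \<in> cclosure A"
    using assms(2-4) unfolding cclosure_def tclosure_def by blast
  then show ?thesis using assms(1) by (simp add: closed_class_def)
qed

lemma closed_class_tclosure: "closed_class A \<Longrightarrow> T \<in> A \<Longrightarrow> tclosure T \<subseteq> A"
  unfolding closed_class_def cclosure_def by blast

lemma Lam_mem_closed_class: "closed_class A \<Longrightarrow> Lam \<in> A"
proof -
  assume A: "closed_class A"
  then obtain T where "T \<in> A" by (auto simp: closed_class_def)
  have "J_op (\<lambda>_. {0}) (I_op (atts T) T) \<in> A"
    by (rule closed_class_J_op_I_op[OF A \<open>T \<in> A\<close>]) auto
  then show ?thesis by (simp add: I_op_all_atts)
qed

lemma closed_class_has_cols: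
  assumes "closed_class A" "T \<in> A" "\<not> is_empty T"
  shows "fst T \<noteq> []"
proof -
  have "T \<in> cclosure A" using assms(1,2) by (simp add: closed_class_def)
  then obtain T0 D \<nu> where T: "T = J_op \<nu> (I_op D T0)" by (auto simp: cclosure_def tclosure_def)
  have "\<not> atts T0 \<subseteq> D"
  proof
    assume "atts T0 \<subseteq> D"
    then have "T = Lam" using T by (simp add: I_op_all_atts)
    then show False using assms(3) by simp
  qed
  then have "atts T \<noteq> {}" using T atts_I_op[of D T0] by auto
  then show ?thesis by (auto simp: atts_def)
qed

lemma J_op_mem_closed_class:
  assumes "closed_class A" "T \<in> A" "\<not> is_empty T" "\<And>r. \<nu> r \<noteq> {} \<and> finite (\<nu> r)"
  shows "J_op \<nu> T \<in> A"
  using closed_class_J_op_I_op[OF assms(1,2), of "{}" \<nu>] assms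
    I_op_empty[OF closed_class_wf[OF assms(1,2)] closed_class_has_cols[OF assms(1-3)]]
  by simp

lemma tclosure_self:
  assumes "wf_table T" "fst T \<noteq> []"
  shows "T \<in> tclosure T"
proof -
  define \<nu> where "\<nu> r = (if \<exists>D. (r, D) \<in> set (snd T) then THE D. (r, D) \<in> set (snd T) else {0})" for r
  have \<nu>: "\<nu> r = D" if "(r, D) \<in> set (snd T)" for r D
    using that wf_tableD(2)[OF assms(1)] unfolding \<nu>_def by (metis eq_key_imp_eq_value the_equality)
  have "\<nu> r \<noteq> {} \<and> finite (\<nu> r)" for r
  proof (cases "\<exists>D. (r, D) \<in> set (snd T)")
    case True
    then obtain D where "(r, D) \<in> set (snd T)" by blast
    then show ?thesis using \<nu> wf_tableD(3)[OF assms(1)] by auto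
  qed (simp add: \<nu>_def)
  moreover have "J_op \<nu> (I_op {} T) = T"
    using I_op_empty[OF assms] J_op_id[OF \<nu>] by simp
  ultimately have "T = J_op \<nu> (I_op {} T) \<and> {} \<subseteq> atts T
      \<and> (\<forall>r. length r = card (atts T - {}) \<longrightarrow> \<nu> r \<noteq> {} \<and> finite (\<nu> r))"
    by simp
  then show ?thesis unfolding tclosure_def by blast
qed

lemma atts_tclosure: "Q \<in> tclosure T \<Longrightarrow> atts Q \<subseteq> atts T"
  unfolding tclosure_def by (auto simp: atts_I_op)

text \<open>Restriction to the columns C.\<close>

definition restrict :: "nat set \<Rightarrow> dtable \<Rightarrow> dtable" where
  "restrict C T = J_op (\<lambda>_. {0}) (I_op (atts T - C) T)"

lemma
  assumes "closed_class A" "T \<in> A" "C \<subseteq> atts T" "C \<noteq> {}"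
  shows restrict_mem: "restrict C T \<in> A"
    and atts_restrict: "atts (restrict C T) = C"
    and Delta_restrict: "Delta (restrict C T) = proj_row (fst T) (atts T - C) ` Delta T"
    and fst_restrict: "fst (restrict C T) = map (\<lambda>i. fst T ! i) (kept_cols (fst T) (atts T - C))"
proof -
  show "restrict C T \<in> A"
    unfolding restrict_def by (rule closed_class_J_op_I_op[OF assms(1,2)]) auto
  show "atts (restrict C T) = C"
    unfolding restrict_def using atts_I_op[of "atts T - C" T] assms(3) by auto
  have kept: "\<not> atts T \<subseteq> atts T - C" using assms(3,4) by auto
  show "Delta (restrict C T) = proj_row (fst T) (atts T - C) ` Delta T"
    unfolding restrict_def using Delta_I_op[OF kept] by simp
  show "fst (restrict C T) = map (\<lambda>i. fst T ! i) (kept_cols (fst T) (atts T - C))"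
    unfolding restrict_def using I_op_eq[OF kept] by simp
qed

lemma proj_row_eq_iff:
  assumes wf: "wf_table T" and r: "r \<in> Delta T" and r': "r' \<in> Delta T"
  shows "proj_row (fst T) (atts T - C) r = proj_row (fst T) (atts T - C) r'
    \<longleftrightarrow> (\<forall>f \<in> C \<inter> atts T. val (fst T) r f = val (fst T) r' f)"
proof -
  let ?cs = "fst T" and ?D = "atts T - C"
  have dist: "distinct ?cs" using wf_tableD(1)[OF wf] .
  have len: "length r = length ?cs" "length r' = length ?cs" using length_Delta[OF wf] r r' by auto
  have kept: "?cs ! i \<in> C \<inter> atts T" "i < length ?cs" if "i \<in> set (kept_cols ?cs ?D)" for i
    using that by (auto simp: kept_cols_def atts_def)
  show ?thesis
  proof
    assume eq: "proj_row ?cs ?D r = proj_row ?cs ?D r'"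
    show "\<forall>f \<in> C \<inter> atts T. val ?cs r f = val ?cs r' f"
    proof
      fix f assume f: "f \<in> C \<inter> atts T"
      then have "f \<in> atts T" "f \<notin> ?D" by auto
      then show "val ?cs r f = val ?cs r' f"
        using val_proj_row[OF dist len(1)] val_proj_row[OF dist len(2)] eq by metis
    qed
  next
    assume agree: "\<forall>f \<in> C \<inter> atts T. val ?cs r f = val ?cs r' f"
    show "proj_row ?cs ?D r = proj_row ?cs ?D r'"
      unfolding proj_row_def
    proof (rule map_cong[OF refl])
      fix i assume "i \<in> set (kept_cols ?cs ?D)"
      then have "val ?cs r (?cs ! i) = val ?cs r' (?cs ! i)" "i < length ?cs"
        using agree kept by auto
      then show "r ! i = r' ! i"
        using val_nth[OF dist len(1)] val_nth[OF dist len(2)] by simp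
    qed
  qed
qed

lemma Delta_sub_restrict:
  assumes "closed_class A" "T \<in> A" "C \<subseteq> atts T" "C \<noteq> {}" "fst ` set w \<subseteq> C"
  shows "Delta (sub (restrict C T) w) = proj_row (fst T) (atts T - C) ` Delta (sub T w)"
proof -
  have wf: "wf_table T" using closed_class_wf[OF assms(1,2)] .
  have "sat (fst (restrict C T)) (proj_row (fst T) (atts T - C) r) w \<longleftrightarrow> sat (fst T) r w"
    if "r \<in> Delta T" for r
  proof -
    have "val (fst (restrict C T)) (proj_row (fst T) (atts T - C) r) f = val (fst T) r f"
      if "f \<in> C" for f
      using val_proj_row[OF wf_tableD(1)[OF wf] length_Delta[OF wf \<open>r \<in> Delta T\<close>]] that assms(3)
      unfolding fst_restrict[OF assms(1-4)] by blast
    then show ?thesis using assms(5) unfolding sat_def by fastforce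
  qed
  then show ?thesis
    by (auto simp: Delta_sub Delta_restrict[OF assms(1-4)])
qed

lemma dpath_Leaf [simp]: "dpath (Leaf x) w d \<longleftrightarrow> w = [] \<and> d = x"
  by (subst dpath.simps) auto

lemma dpath_Node [simp]:
  "dpath (Node f ch) w d \<longleftrightarrow> (\<exists>\<delta> t w'. (\<delta>, t) \<in> set ch \<and> w = (f, \<delta>) # w' \<and> dpath t w' d)"
  by (subst dpath.simps) auto

lemma att_in_Leaf [simp]: "\<not> att_in (Leaf x) g"
  by (subst att_in.simps) auto

lemma att_in_Node [simp]: "att_in (Node f ch) g \<longleftrightarrow> g = f \<or> (\<exists>p \<in> set ch. att_in (snd p) g)"
  by (auto intro: att_in.intros elim: att_in.cases)

lemma att_in_if_dpath: "dpath t w d \<Longrightarrow> (f, \<delta>) \<in> set w \<Longrightarrow> att_in t f"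
  by (induction rule: dpath.induct) force+

lemma wf_dt_has_path: "wf_dt t \<Longrightarrow> \<exists>w d. dpath t w d"
proof (induction rule: wf_dt.induct)
  case (2 ch f)
  then obtain \<delta> t where "(\<delta>, t) \<in> set ch" by (cases ch) auto
  with 2 show ?case by fastforce
qed auto

definition paths :: "dtree \<Rightarrow> (nat \<times> bool) list set" where
  "paths t = {w. \<exists>d. dpath t w d}"

lemma paths_Leaf [simp]: "paths (Leaf d) = {[]}"
  by (simp add: paths_def)

lemma paths_Node: "paths (Node f ch) = (\<Union>p \<in> set ch. (\<lambda>w. (f, fst p) # w) ` paths (snd p))"
  by (auto simp: paths_def) force+

lemma finite_paths: "finite (paths t)"
proof (induction t)
  case (Node f ch)
  then have "finite (paths (snd p))" if "p \<in> set ch" for p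
    using that by (simp add: prod_set_defs)
  then show ?case by (simp add: paths_Node)
qed simp

lemma card_paths_le:
  "det_dt t \<Longrightarrow> (\<And>w. w \<in> paths t \<Longrightarrow> length w \<le> h) \<Longrightarrow> card (paths t) \<le> 2 ^ h"
proof (induction t arbitrary: h)
  case (Node f ch)
  have distinct: "distinct (map fst ch)" and det: "\<And>p. p \<in> set ch \<Longrightarrow> det_dt (snd p)"
    using Node.prems(1) by (auto elim: det_dt.cases)
  show ?case
  proof (cases "paths (Node f ch) = {}")
    case False
    then obtain w where w: "w \<in> paths (Node f ch)" by blast
    then have "w \<noteq> []" by (auto simp: paths_Node)
    then have "h \<noteq> 0" using Node.prems(2)[OF w] by (cases w) auto
    then obtain h' where h: "h = Suc h'" by (cases h) auto
    have IH: "card (paths (snd p)) \<le> 2 ^ h'" if p: "p \<in> set ch" for p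
    proof (rule Node.IH)
      show "snd p \<in> Basic_BNFs.snds p" by (rule snds.intros)
      show "det_dt (snd p)" using det p .
      show "length w \<le> h'" if "w \<in> paths (snd p)" for w
        using Node.prems(2)[of "(f, fst p) # w"] p that h by (auto simp: paths_Node)
    qed fact
    have "card (set ch) = card (fst ` set ch)"
      using distinct by (simp add: card_image distinct_map)
    also have "\<dots> \<le> card (UNIV :: bool set)" by (rule card_mono) auto
    finally have card_ch: "card (set ch) \<le> 2" by simp
    have "card (paths (Node f ch)) \<le> (\<Sum>p \<in> set ch. card ((\<lambda>w. (f, fst p) # w) ` paths (snd p)))"
      unfolding paths_Node by (rule card_UN_le) simp
    also have "\<dots> \<le> (\<Sum>p \<in> set ch. 2 ^ h')"
      by (rule sum_mono) (use IH card_image_le[OF finite_paths] order_trans in blast)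
    also have "\<dots> \<le> 2 * 2 ^ h'" using card_ch by simp
    finally show ?thesis using h by simp
  qed simp
qed simp

lemma tree_atts_single: "tree_atts [t] = {f. att_in t f}"
  by (simp add: tree_atts_def)

lemma cpath_single: "cpath [t] w d \<longleftrightarrow> dpath t w d"
  by (simp add: cpath_def)

primrec chain :: "(nat \<times> bool) list \<Rightarrow> nat \<Rightarrow> dtree" where
  "chain [] d = Leaf d"
| "chain (a # w) d = Node (fst a) [(snd a, chain w d)]"

lemma dpath_chain: "dpath (chain w d) w' d' \<longleftrightarrow> w' = w \<and> d' = d"
  by (induction w arbitrary: w') auto

lemma wf_dt_chain: "wf_dt (chain w d)"
  by (induction w) (auto intro: wf_dt.intros)

lemma att_in_chain: "att_in (chain w d) g \<Longrightarrow> g \<in> fst ` set w"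
  by (induction w) auto

primrec full_tree :: "((nat \<times> bool) list \<Rightarrow> nat) \<Rightarrow> nat list \<Rightarrow> (nat \<times> bool) list \<Rightarrow> dtree" where
  "full_tree dec [] \<beta> = Leaf (dec \<beta>)"
| "full_tree dec (f # fs) \<beta> =
     Node f [(False, full_tree dec fs (\<beta> @ [(f, False)])), (True, full_tree dec fs (\<beta> @ [(f, True)]))]"

lemma wf_dt_full_tree: "wf_dt (full_tree dec fs \<beta>)"
  by (induction fs arbitrary: \<beta>) (auto intro!: wf_dt.intros)

lemma det_dt_full_tree: "det_dt (full_tree dec fs \<beta>)"
  by (induction fs arbitrary: \<beta>) (auto intro!: det_dt.intros)

lemma att_in_full_tree: "att_in (full_tree dec fs \<beta>) g \<Longrightarrow> g \<in> set fs"
  by (induction fs arbitrary: \<beta>) auto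

lemma dpath_full_tree:
  "dpath (full_tree dec fs \<beta>) w d \<Longrightarrow> d = dec (\<beta> @ w) \<and> (\<forall>f \<in> set fs. \<exists>\<delta>. (f, \<delta>) \<in> set w)"
  by (induction fs arbitrary: \<beta> w) fastforce+

lemma full_tree_covers: "\<exists>w d. dpath (full_tree dec fs \<beta>) w d \<and> sat cs r w"
proof (induction fs arbitrary: \<beta>)
  case (Cons f fs)
  let ?\<delta> = "val cs r f"
  obtain w d where "dpath (full_tree dec fs (\<beta> @ [(f, ?\<delta>)])) w d" "sat cs r w"
    using Cons.IH by blast
  then have "dpath (full_tree dec (f # fs) \<beta>) ((f, ?\<delta>) # w) d \<and> sat cs r ((f, ?\<delta>) # w)"
    by (cases ?\<delta>) auto
  then show ?case by blast
qed simp

lemma sat_all_cols_unique: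
  assumes "wf_table T" "\<forall>f \<in> set (fst T). \<exists>\<delta>. (f, \<delta>) \<in> set w"
    and "r \<in> Delta T" "r' \<in> Delta T" "sat (fst T) r w" "sat (fst T) r' w"
  shows "r = r'"
proof (rule nth_equalityI)
  have len: "length r = length (fst T)" "length r' = length (fst T)"
    using length_Delta[OF assms(1)] assms(3,4) by auto
  then show "length r = length r'" by simp
  fix i assume "i < length r"
  then have i: "i < length (fst T)" using len by simp
  then obtain \<delta> where "(fst T ! i, \<delta>) \<in> set w" using assms(2) by (meson nth_mem)
  then have "val (fst T) r (fst T ! i) = val (fst T) r' (fst T ! i)"
    using assms(5,6) by (auto simp: sat_def)
  then show "r ! i = r' ! i"
    using val_nth[OF wf_tableD(1)[OF assms(1)] _ i] len by simp
qed

lemma det_tree_exists: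
  assumes "wf_table T"
  shows "\<exists>\<Gamma>. det_tree T \<Gamma>"
proof -
  let ?cs = "fst T"
  define t where "t = full_tree (\<lambda>w. SOME x. x \<in> PiT (sub T w)) ?cs []"
  have leaf: "d \<in> PiT (sub T w)" if path: "dpath t w d" and ne: "\<not> is_empty (sub T w)" for w d
  proof -
    obtain r where r: "r \<in> Delta T" "sat ?cs r w" using ne by (auto simp: is_empty_iff Delta_sub)
    obtain D where rD: "(r, D) \<in> set (snd T)" using r(1) by (auto simp: Delta_def)
    note full = dpath_full_tree[OF path[unfolded t_def]]
    have "D' = D" if "(r', D') \<in> set (snd T)" "sat ?cs r' w" for r' D'
    proof -
      have "r' \<in> Delta T" using that(1) by (force simp: Delta_def)
      then have "r' = r"
        using sat_all_cols_unique[OF assms _ _ r(1) that(2) r(2)] full by blast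
      then show ?thesis using that(1) rD wf_tableD(2)[OF assms] by (metis eq_key_imp_eq_value)
    qed
    then have "x \<in> PiT (sub T w) \<longleftrightarrow> x \<in> D" for x
      using rD r(2) unfolding mem_PiT_sub by fast
    moreover have "(SOME x. x \<in> D) \<in> D" using wf_tableD(3)[OF assms rD] by (simp add: some_in_eq)
    ultimately show ?thesis using full by simp
  qed
  have "det_tree T [t]"
    unfolding det_tree_def nd_tree_def two_tree_def cpath_single
  proof (intro conjI ballI allI impI)
    show "wf_dt t'" "det_dt t'" if "t' \<in> set [t]" for t'
      using that wf_dt_full_tree det_dt_full_tree unfolding t_def by auto
    show "tree_atts [t] \<subseteq> atts T"
      using att_in_full_tree unfolding t_def tree_atts_single atts_def by blast
    show "\<exists>w d. dpath t w d \<and> r \<in> Delta (sub T w)" if "r \<in> Delta T" for r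
      using full_tree_covers that unfolding t_def Delta_sub by blast
    show "is_empty (sub T w) \<or> d \<in> PiT (sub T w)" if "dpath t w d" for w d
      using leaf that by blast
  qed simp_all
  then show ?thesis by blast
qed

lemma partially_bounded_cmD:
  assumes "partially_bounded_cm \<psi>"
  shows "\<psi> [] = 0" "mset a = mset b \<Longrightarrow> \<psi> a = \<psi> b" "\<psi> a \<le> \<psi> (a @ b)"
    "\<psi> (a @ b) \<le> \<psi> a + \<psi> b"
  using assms unfolding partially_bounded_cm_def by blast+

lemma bounded_cm_partially_bounded [simp]: "bounded_cm \<psi> \<Longrightarrow> partially_bounded_cm \<psi>"
  by (simp add: bounded_cm_def)

lemma bounded_cm_length_le: "bounded_cm \<psi> \<Longrightarrow> length a \<le> \<psi> a"
  by (simp add: bounded_cm_def)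

lemma psi_subset_mset_le:
  assumes "partially_bounded_cm \<psi>" "mset a \<subseteq># mset b"
  shows "\<psi> a \<le> \<psi> b"
proof -
  obtain c where "mset b = mset a + c" using assms(2) subset_mset.le_iff_add by blast
  moreover obtain cs where "mset cs = c" using ex_mset by blast
  ultimately have "\<psi> b = \<psi> (a @ cs)" using partially_bounded_cmD(2)[OF assms(1)] by simp
  then show ?thesis using partially_bounded_cmD(3)[OF assms(1)] by simp
qed

lemma psi_singleton_le: "partially_bounded_cm \<psi> \<Longrightarrow> f \<in> set a \<Longrightarrow> \<psi> [f] \<le> \<psi> a"
  by (rule psi_subset_mset_le) auto

lemma psi_prefix_le: "partially_bounded_cm \<psi> \<Longrightarrow> prefix a b \<Longrightarrow> \<psi> a \<le> \<psi> b"
  by (auto simp: prefix_def intro: partially_bounded_cmD(3))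

lemma psi_le_length_mult:
  assumes "partially_bounded_cm \<psi>" "\<And>f. f \<in> set a \<Longrightarrow> \<psi> [f] \<le> n"
  shows "\<psi> a \<le> length a * n"
  using assms(2)
proof (induction a)
  case Nil
  show ?case using partially_bounded_cmD(1)[OF assms(1)] by simp
next
  case (Cons f a)
  have "\<psi> (f # a) \<le> \<psi> [f] + \<psi> a" using partially_bounded_cmD(4)[OF assms(1), of "[f]" a] by simp
  also have "\<dots> \<le> n + length a * n" using Cons by (intro add_mono) auto
  finally show ?case by simp
qed

lemma psiw_Nil [simp]: "partially_bounded_cm \<psi> \<Longrightarrow> psiw \<psi> [] = 0"
  unfolding psiw_def by (simp add: partially_bounded_cmD(1))

lemma psiw_append_le: "partially_bounded_cm \<psi> \<Longrightarrow> psiw \<psi> (a @ b) \<le> psiw \<psi> a + psiw \<psi> b"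
  unfolding psiw_def by (simp add: partially_bounded_cmD(4))

lemma length_le_psiw: "bounded_cm \<psi> \<Longrightarrow> length w \<le> psiw \<psi> w"
  unfolding psiw_def using bounded_cm_length_le[of \<psi> "map fst w"] by simp

lemma finite_cpaths: "finite {w. \<exists>d. cpath \<Gamma> w d}"
proof -
  have "{w. \<exists>d. cpath \<Gamma> w d} = (\<Union>t \<in> set \<Gamma>. paths t)"
    by (auto simp: cpath_def paths_def)
  then show ?thesis by (simp add: finite_paths)
qed

lemma psi_tree_eq: "psi_tree \<psi> \<Gamma> = Max (psiw \<psi> ` {w. \<exists>d. cpath \<Gamma> w d})"
  unfolding psi_tree_def by (rule arg_cong[where f = Max]) auto

lemma psi_tree_ge: "cpath \<Gamma> w d \<Longrightarrow> psiw \<psi> w \<le> psi_tree \<psi> \<Gamma>"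
  unfolding psi_tree_eq by (rule Max_ge) (use finite_cpaths in auto)

lemma psi_tree_le:
  assumes "two_tree \<Gamma>" "\<And>w d. cpath \<Gamma> w d \<Longrightarrow> psiw \<psi> w \<le> c"
  shows "psi_tree \<psi> \<Gamma> \<le> c"
proof -
  obtain t where t: "t \<in> set \<Gamma>" "wf_dt t" using assms(1) by (cases \<Gamma>) (auto simp: two_tree_def)
  then obtain w d where "cpath \<Gamma> w d" using wf_dt_has_path unfolding cpath_def by blast
  then show ?thesis unfolding psi_tree_eq
    by (intro Max.boundedI) (use finite_cpaths assms(2) in auto)
qed

lemma psi_d_le: "det_tree T \<Gamma> \<Longrightarrow> psi_d \<psi> T \<le> psi_tree \<psi> \<Gamma>"
  unfolding psi_d_def by (auto simp: Inf_nat_def intro!: Least_le)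

lemma psi_a_le: "nd_tree T \<Gamma> \<Longrightarrow> psi_a \<psi> T \<le> psi_tree \<psi> \<Gamma>"
  unfolding psi_a_def by (auto simp: Inf_nat_def intro!: Least_le)

lemma psi_a_Lam [simp]: "psi_a \<psi> Lam = 0"
  by (simp add: psi_a_def)

lemma psi_d_attained:
  assumes "wf_table T" "\<not> is_empty T"
  shows "\<exists>\<Gamma>. det_tree T \<Gamma> \<and> psi_d \<psi> T = psi_tree \<psi> \<Gamma>"
proof -
  have "{psi_tree \<psi> \<Gamma> | \<Gamma>. det_tree T \<Gamma>} \<noteq> {}" using det_tree_exists[OF assms(1)] by auto
  from Inf_nat_def1[OF this] show ?thesis using assms(2) unfolding psi_d_def by auto
qed

lemma psi_a_attained:
  assumes "wf_table T" "\<not> is_empty T"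
  shows "\<exists>\<Gamma>. nd_tree T \<Gamma> \<and> psi_a \<psi> T = psi_tree \<psi> \<Gamma>"
proof -
  have "{psi_tree \<psi> \<Gamma> | \<Gamma>. nd_tree T \<Gamma>} \<noteq> {}"
    using det_tree_exists[OF assms(1)] by (auto simp: det_tree_def)
  from Inf_nat_def1[OF this] show ?thesis using assms(2) unfolding psi_a_def by auto
qed

lemma m_psi_ge: "f \<in> atts T \<Longrightarrow> \<psi> [f] \<le> m_psi \<psi> T"
  unfolding m_psi_def by (rule Max_ge) auto

lemma m_psi_le: "(\<And>f. f \<in> atts T \<Longrightarrow> \<psi> [f] \<le> n) \<Longrightarrow> m_psi \<psi> T \<le> n"
  unfolding m_psi_def by (rule Max.boundedI) auto

section \<open>Separating words force deep deterministic trees\<close>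

lemma card_paths_le_exp_psi_tree:
  assumes "bounded_cm \<psi>" "det_dt t"
  shows "card (paths t) \<le> 2 ^ psi_tree \<psi> [t]"
proof (rule card_paths_le[OF assms(2)])
  fix w assume "w \<in> paths t"
  then have "psiw \<psi> w \<le> psi_tree \<psi> [t]"
    by (auto simp: paths_def cpath_single intro: psi_tree_ge)
  then show "length w \<le> psi_tree \<psi> [t]" using length_le_psiw[OF assms(1), of w] by linarith
qed

text \<open>Rows with pairwise disjoint decision sets must reach pairwise different leaves.\<close>

lemma card_rows_le_card_paths:
  assumes tree: "nd_tree (J_op \<nu> T) [t]" and R: "R \<subseteq> Delta T"
    and disj: "\<And>r r'. r \<in> R \<Longrightarrow> r' \<in> R \<Longrightarrow> r \<noteq> r' \<Longrightarrow> \<nu> r \<inter> \<nu> r' = {}"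
  shows "card R \<le> card (paths t)"
proof -
  have "\<exists>w d. dpath t w d \<and> sat (fst T) r w \<and> d \<in> PiT (sub (J_op \<nu> T) w)" if "r \<in> R" for r
  proof -
    have "r \<in> Delta (J_op \<nu> T)" using R that by auto
    then obtain w d where w: "dpath t w d" "r \<in> Delta (sub T w)"
      using tree unfolding nd_tree_def cpath_single Delta_sub by auto
    then have "\<not> is_empty (sub (J_op \<nu> T) w)" by (auto simp: is_empty_iff Delta_sub)
    then have "d \<in> PiT (sub (J_op \<nu> T) w)"
      using tree w(1) unfolding nd_tree_def cpath_single by blast
    with w show ?thesis by (auto simp: Delta_sub)
  qed
  then obtain p dec where p: "\<And>r. r \<in> R \<Longrightarrow>
      dpath t (p r) (dec r) \<and> sat (fst T) r (p r) \<and> dec r \<in> PiT (sub (J_op \<nu> T) (p r))"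
    by metis
  have "inj_on p R"
  proof (rule inj_onI, rule ccontr)
    fix r r' assume r: "r \<in> R" "r' \<in> R" "p r = p r'" "r \<noteq> r'"
    then have "dec r \<in> \<nu> r" "dec r \<in> \<nu> r'"
      using p R unfolding mem_PiT_sub_J_op by (metis subsetD)+
    then show False using disj[OF r(1,2,4)] by blast
  qed
  then have "card R = card (p ` R)" by (simp add: card_image)
  also have "\<dots> \<le> card (paths t)"
    by (rule card_mono[OF finite_paths]) (use p in \<open>auto simp: paths_def\<close>)
  finally show ?thesis .
qed

text \<open>e names the words of W; a row satisfying no word of W (there is none if W covers the
  table) gets the dummy label {0}.\<close>

definition word_labels ::
  "nat list \<Rightarrow> ((nat \<times> bool) list \<Rightarrow> nat) \<Rightarrow> (nat \<times> bool) list set \<Rightarrow> row \<Rightarrow> nat set" where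
  "word_labels cs e W r = (if \<exists>w \<in> W. sat cs r w then e ` {w \<in> W. sat cs r w} else {0})"

lemma psi_a_word_labels_le:
  assumes W: "finite W" "W \<noteq> {}" "W \<subseteq> words T" "\<And>w. w \<in> W \<Longrightarrow> psiw \<psi> w \<le> c"
    and cover: "\<And>r. r \<in> Delta T \<Longrightarrow> \<exists>w \<in> W. sat (fst T) r w"
  shows "psi_a \<psi> (J_op (word_labels (fst T) e W) T) \<le> c"
proof -
  let ?T' = "J_op (word_labels (fst T) e W) T"
  obtain ws where ws: "set ws = W" using finite_list[OF W(1)] by blast
  define \<Gamma> where "\<Gamma> = map (\<lambda>w. chain w (e w)) ws"
  have cpath: "cpath \<Gamma> w d \<longleftrightarrow> w \<in> W \<and> d = e w" for w d
    unfolding \<Gamma>_def cpath_def using ws by (auto simp: dpath_chain)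
  have "nd_tree ?T' \<Gamma>"
    unfolding nd_tree_def two_tree_def
  proof (intro conjI allI impI ballI)
    show "\<Gamma> \<noteq> []" using ws W(2) by (auto simp: \<Gamma>_def)
    show "wf_dt t" if "t \<in> set \<Gamma>" for t using that wf_dt_chain by (auto simp: \<Gamma>_def)
    show "tree_atts \<Gamma> \<subseteq> atts ?T'"
      using ws W(3) att_in_chain by (fastforce simp: tree_atts_def \<Gamma>_def words_def)
    show "\<exists>w d. cpath \<Gamma> w d \<and> r \<in> Delta (sub ?T' w)" if "r \<in> Delta ?T'" for r
      using cover[of r] that cpath by (auto simp: Delta_sub)
    show "is_empty (sub ?T' w) \<or> d \<in> PiT (sub ?T' w)" if "cpath \<Gamma> w d" for w d
      using that unfolding cpath mem_PiT_sub_J_op word_labels_def by auto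
  qed
  then show ?thesis
    using psi_a_le psi_tree_le[of \<Gamma> \<psi> c] W(4) cpath order_trans
    unfolding nd_tree_def by blast
qed

definition essential :: "nat list \<Rightarrow> row set \<Rightarrow> (nat \<times> bool) list set \<Rightarrow> (nat \<times> bool) list set" where
  "essential cs R W = {w \<in> W. \<exists>r \<in> R. \<forall>w' \<in> W. sat cs r w' \<longleftrightarrow> w' = w}"

lemma card_essential_le_card_paths:
  assumes e: "inj_on e W" and tree: "nd_tree (J_op (word_labels (fst T) e W) T) [t]"
  shows "card (essential (fst T) (Delta T) W) \<le> card (paths t)"
proof -
  let ?E = "essential (fst T) (Delta T) W" and ?\<nu> = "word_labels (fst T) e W"
  have "\<exists>r \<in> Delta T. \<forall>w' \<in> W. sat (fst T) r w' \<longleftrightarrow> w' = w" if "w \<in> ?E" for w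
    using that unfolding essential_def by blast
  then obtain row where row: "\<And>w. w \<in> ?E \<Longrightarrow> row w \<in> Delta T \<and> (\<forall>w' \<in> W. sat (fst T) (row w) w' \<longleftrightarrow> w' = w)"
    by metis
  have EW: "?E \<subseteq> W" unfolding essential_def by blast
  have labels: "?\<nu> (row w) = {e w}" if "w \<in> ?E" for w
  proof -
    have "{w' \<in> W. sat (fst T) (row w) w'} = {w}" using row[OF that] that EW by auto
    then show ?thesis unfolding word_labels_def by auto
  qed
  have e_eq: "w = w'" if "w \<in> ?E" "w' \<in> ?E" "e w = e w'" for w w'
    using e EW that by (auto dest: inj_onD)
  have "inj_on row ?E"
    by (rule inj_onI) (metis labels e_eq singleton_inject)
  then have "card ?E = card (row ` ?E)" by (simp add: card_image)
  also have "\<dots> \<le> card (paths t)"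
  proof (rule card_rows_le_card_paths[OF tree])
    show "row ` ?E \<subseteq> Delta T" using row by blast
    fix r r' assume "r \<in> row ` ?E" "r' \<in> row ` ?E" "r \<noteq> r'"
    then obtain w w' where "w \<in> ?E" "w' \<in> ?E" "r = row w" "r' = row w'" "e w \<noteq> e w'"
      using e_eq by blast
    then show "?\<nu> r \<inter> ?\<nu> r' = {}" using labels by simp
  qed
  finally show ?thesis .
qed

lemma card_essential_le_exp_psi_d:
  assumes A: "closed_class A" and psi: "bounded_cm \<psi>" and T: "T \<in> A" "\<not> is_empty T"
    and W: "finite W" "W \<noteq> {}" "W \<subseteq> words T" "\<And>w. w \<in> W \<Longrightarrow> psiw \<psi> w \<le> c"
    and cover: "\<And>r. r \<in> Delta T \<Longrightarrow> \<exists>w \<in> W. sat (fst T) r w"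
  shows "\<exists>T' \<in> A. psi_a \<psi> T' \<le> c \<and> card (essential (fst T) (Delta T) W) \<le> 2 ^ psi_d \<psi> T'"
proof -
  obtain e :: "(nat \<times> bool) list \<Rightarrow> nat" where e: "inj_on e W"
    using finite_imp_inj_to_nat_seg[OF W(1)] by blast
  let ?T' = "J_op (word_labels (fst T) e W) T"
  have T': "?T' \<in> A"
    by (rule J_op_mem_closed_class[OF A T]) (use W(1) in \<open>auto simp: word_labels_def\<close>)
  obtain \<Gamma> where \<Gamma>: "det_tree ?T' \<Gamma>" "psi_d \<psi> ?T' = psi_tree \<psi> \<Gamma>"
    using psi_d_attained[OF closed_class_wf[OF A T']] T(2) by auto
  then obtain t where t: "\<Gamma> = [t]" "det_dt t" by (cases \<Gamma>) (auto simp: det_tree_def)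
  have "card (essential (fst T) (Delta T) W) \<le> card (paths t)"
    using card_essential_le_card_paths[OF e] \<Gamma>(1) t(1) by (simp add: det_tree_def)
  also have "\<dots> \<le> 2 ^ psi_d \<psi> ?T'"
    using card_paths_le_exp_psi_tree[OF psi t(2)] \<Gamma>(2) t(1) by simp
  finally show ?thesis
    using T' psi_a_word_labels_le[OF W cover] by blast
qed

section \<open>Parameters bounded through the deterministic complexity\<close>

lemma essential_irr_psi_cover:
  assumes U: "irr_psi_cover \<psi> T n U"
  shows "essential (fst T) (Delta T) U = U"
proof (intro equalityI subsetI)
  fix a assume a: "a \<in> U"
  have cover: "finite U" "U \<subseteq> {\<alpha> \<in> words T. psiw \<psi> \<alpha> \<le> n}" "(\<Union>\<alpha> \<in> U. Delta (sub T \<alpha>)) = Delta T"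
    using U by (auto simp: irr_psi_cover_def psi_cover_def)
  have "\<not> psi_cover \<psi> T n (U - {a})" using U a by (auto simp: irr_psi_cover_def)
  then have "(\<Union>\<alpha> \<in> U - {a}. Delta (sub T \<alpha>)) \<noteq> Delta T"
    using cover(1,2) by (auto simp: psi_cover_def)
  then obtain r where r: "r \<in> Delta T" "r \<notin> (\<Union>\<alpha> \<in> U - {a}. Delta (sub T \<alpha>))"
    by (auto simp: Delta_sub)
  with cover(3) have "\<forall>w \<in> U. sat (fst T) r w \<longleftrightarrow> w = a" by (auto simp: Delta_sub)
  with a r(1) show "a \<in> essential (fst T) (Delta T) U" by (auto simp: essential_def)
qed (simp add: essential_def)

lemma irr_psi_cover_card_le_exp_psi_d:
  assumes A: "closed_class A" and psi: "bounded_cm \<psi>" and T: "T \<in> A" and U: "irr_psi_cover \<psi> T n U"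
  shows "\<exists>T' \<in> A. psi_a \<psi> T' \<le> n \<and> card U \<le> 2 ^ psi_d \<psi> T'"
proof (cases "U = {}")
  case True
  then show ?thesis using Lam_mem_closed_class[OF A] by force
next
  case False
  have cover: "finite U" "U \<subseteq> {\<alpha> \<in> words T. psiw \<psi> \<alpha> \<le> n}" "(\<Union>\<alpha> \<in> U. Delta (sub T \<alpha>)) = Delta T"
    using U by (auto simp: irr_psi_cover_def psi_cover_def)
  have ne: "\<not> is_empty T"
  proof
    assume "is_empty T"
    then have "psi_cover \<psi> T n {}" by (simp add: psi_cover_def is_empty_iff)
    with U False show False by (auto simp: irr_psi_cover_def)
  qed
  have "\<exists>T' \<in> A. psi_a \<psi> T' \<le> n \<and> card (essential (fst T) (Delta T) U) \<le> 2 ^ psi_d \<psi> T'"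
  proof (rule card_essential_le_exp_psi_d[OF A psi T ne cover(1) False])
    show "U \<subseteq> words T" "\<And>w. w \<in> U \<Longrightarrow> psiw \<psi> w \<le> n" using cover(2) by auto
    show "\<exists>w \<in> U. sat (fst T) r w" if "r \<in> Delta T" for r
      using cover(3) that by (auto simp: Delta_sub)
  qed
  then show ?thesis unfolding essential_irr_psi_cover[OF U] .
qed

lemma annihilating_subword:
  assumes "annihilating T \<alpha>" "set \<beta> \<subseteq> set \<alpha>" "is_empty (sub T \<beta>)"
  shows "annihilating T \<beta>"
proof -
  have "set (map fst \<beta>) \<subseteq> set (map fst \<alpha>)" using assms(2) by auto
  with assms show ?thesis unfolding annihilating_def words_def by blast
qed

lemma irr_annihilating_sub_nonempty:
  assumes "irr_annihilating T \<alpha>" "I \<subset> {..<length \<alpha>}"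
  shows "\<not> is_empty (sub T (nths \<alpha> I))"
  using assms annihilating_subword[OF _ set_nths_subset] unfolding irr_annihilating_def by blast

lemma irr_annihilating_distinct:
  assumes irr: "irr_annihilating T \<alpha>"
  shows "distinct \<alpha>"
proof (rule ccontr)
  assume "\<not> distinct \<alpha>"
  then obtain i j where ij: "i < length \<alpha>" "j < length \<alpha>" "i \<noteq> j" "\<alpha> ! i = \<alpha> ! j"
    by (auto simp: distinct_conv_nth)
  let ?I = "{..<length \<alpha>} - {j}"
  have "set (nths \<alpha> ?I) = set \<alpha>"
    using ij by (auto simp: set_nths in_set_conv_nth) (metis lessThan_iff)
  then have "is_empty (sub T (nths \<alpha> ?I)) = is_empty (sub T \<alpha>)"
    by (simp add: is_empty_iff Delta_sub sat_def)
  moreover have "?I \<subset> {..<length \<alpha>}" using ij(2) by auto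
  ultimately show False
    using irr_annihilating_sub_nonempty[OF irr] irr by (auto simp: irr_annihilating_def annihilating_def)
qed

lemma irr_annihilating_length_le_card_atts:
  assumes irr: "irr_annihilating T \<alpha>"
  shows "length \<alpha> \<le> card (atts T)"
proof -
  have ann: "annihilating T \<alpha>" using irr by (simp add: irr_annihilating_def)
  have "length \<alpha> = card (set \<alpha>)" using irr_annihilating_distinct[OF irr] by (simp add: distinct_card)
  also have "\<dots> = card (fst ` set \<alpha>)"
  proof (rule card_image[symmetric], rule inj_onI)
    fix x y assume "x \<in> set \<alpha>" "y \<in> set \<alpha>" "fst x = fst y"
    with ann show "x = y" by (cases x, cases y) (auto simp: annihilating_def)
  qed
  also have "\<dots> \<le> card (atts T)"
    using ann by (intro card_mono) (auto simp: annihilating_def words_def)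
  finally show ?thesis .
qed

text \<open>Dropping the j-th letter of an irreducible annihilating word leaves a row, which must
  violate exactly that letter.\<close>

lemma irr_annihilating_flip_row:
  assumes irr: "irr_annihilating T \<alpha>" and j: "j < length \<alpha>"
  obtains r where "r \<in> Delta T" "\<And>x. x \<in> set \<alpha> \<Longrightarrow> val (fst T) r (fst x) \<noteq> snd x \<longleftrightarrow> x = \<alpha> ! j"
proof -
  let ?I = "{..<length \<alpha>} - {j}"
  have "?I \<subset> {..<length \<alpha>}" using j by auto
  from irr_annihilating_sub_nonempty[OF irr this]
  obtain r where r: "r \<in> Delta T" "sat (fst T) r (nths \<alpha> ?I)" by (auto simp: is_empty_iff Delta_sub)
  have set_\<alpha>: "set \<alpha> = insert (\<alpha> ! j) (set (nths \<alpha> ?I))"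
    using j by (auto simp: set_nths in_set_conv_nth) (metis lessThan_iff)
  have "\<not> sat (fst T) r \<alpha>"
    using r(1) irr by (auto simp: irr_annihilating_def annihilating_def is_empty_iff Delta_sub)
  then have "val (fst T) r (fst (\<alpha> ! j)) \<noteq> snd (\<alpha> ! j)"
    using r(2) set_\<alpha> by (cases "\<alpha> ! j") (auto simp: sat_def)
  moreover have "val (fst T) r (fst x) = snd x" if "x \<in> set (nths \<alpha> ?I)" for x
    using r(2) that by (auto simp: sat_def)
  ultimately show thesis using that[OF r(1)] set_\<alpha> by (metis insert_iff)
qed

definition negation :: "nat \<times> bool \<Rightarrow> (nat \<times> bool) list" where
  "negation x = [(fst x, \<not> snd x)]"

lemma sat_negation [simp]: "sat cs r (negation x) \<longleftrightarrow> val cs r (fst x) \<noteq> snd x"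
  by (cases x) (auto simp: negation_def)

lemma negation_eq_iff [simp]: "negation x = negation y \<longleftrightarrow> x = y"
  by (cases x; cases y) (auto simp: negation_def)

lemma essential_negations:
  assumes irr: "irr_annihilating T \<alpha>"
  shows "essential (fst T) (Delta T) (negation ` set \<alpha>) = negation ` set \<alpha>"
proof (intro equalityI subsetI)
  fix w assume w: "w \<in> negation ` set \<alpha>"
  then obtain j where j: "j < length \<alpha>" "w = negation (\<alpha> ! j)" by (auto simp: in_set_conv_nth)
  obtain r where r: "r \<in> Delta T"
    and flip: "\<And>x. x \<in> set \<alpha> \<Longrightarrow> val (fst T) r (fst x) \<noteq> snd x \<longleftrightarrow> x = \<alpha> ! j"
    using irr_annihilating_flip_row[OF irr j(1)] by blast
  have "\<forall>w' \<in> negation ` set \<alpha>. sat (fst T) r w' \<longleftrightarrow> w' = w" using flip j(2) by auto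
  then show "w \<in> essential (fst T) (Delta T) (negation ` set \<alpha>)"
    using r w unfolding essential_def by blast
qed (simp add: essential_def)

lemma irr_annihilating_length_le_exp_psi_d:
  assumes A: "closed_class A" and psi: "bounded_cm \<psi>" and T: "T \<in> A" "m_psi \<psi> T \<le> n"
    and irr: "irr_annihilating T \<alpha>"
  shows "\<exists>T' \<in> A. psi_a \<psi> T' \<le> n \<and> length \<alpha> \<le> 2 ^ psi_d \<psi> T'"
proof (cases "\<alpha> = []")
  case True
  then show ?thesis using Lam_mem_closed_class[OF A] by force
next
  case False
  let ?W = "negation ` set \<alpha>"
  have ann: "annihilating T \<alpha>" using irr by (simp add: irr_annihilating_def)
  have "{} \<subset> {..<length \<alpha>}" using False by auto
  from irr_annihilating_sub_nonempty[OF irr this] have ne: "\<not> is_empty T"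
    by (simp add: is_empty_iff Delta_sub)
  have "\<exists>T' \<in> A. psi_a \<psi> T' \<le> n \<and> card (essential (fst T) (Delta T) ?W) \<le> 2 ^ psi_d \<psi> T'"
  proof (rule card_essential_le_exp_psi_d[OF A psi T(1) ne])
    show "finite ?W" "?W \<noteq> {}" using False by auto
    show "?W \<subseteq> words T" using ann by (auto simp: negation_def words_def annihilating_def)
    show "psiw \<psi> w \<le> n" if "w \<in> ?W" for w
    proof -
      obtain x where x: "x \<in> set \<alpha>" "w = negation x" using \<open>w \<in> ?W\<close> by blast
      then have "fst x \<in> atts T" using ann by (auto simp: annihilating_def words_def)
      then show ?thesis using m_psi_ge[of "fst x" T \<psi>] T(2) x(2) by (simp add: negation_def psiw_def)
    qed
    show "\<exists>w \<in> ?W. sat (fst T) r w" if "r \<in> Delta T" for r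
    proof -
      have "\<not> sat (fst T) r \<alpha>" using that ann by (auto simp: annihilating_def is_empty_iff Delta_sub)
      then obtain x where "x \<in> set \<alpha>" "val (fst T) r (fst x) \<noteq> snd x"
        unfolding sat_def case_prod_beta by blast
      then show ?thesis by auto
    qed
  qed
  moreover have "card ?W = length \<alpha>"
    using irr_annihilating_distinct[OF irr] by (simp add: card_image distinct_card inj_on_def)
  ultimately show ?thesis unfolding essential_negations[OF irr] by simp
qed

lemma complete_table_Delta:
  assumes "wf_table Q" "complete_table Q"
  shows "Delta Q = {r. length r = length (fst Q)}"
proof (rule card_subset_eq)
  show "finite {r :: bool list. length r = length (fst Q)}"
    using finite_lists_length_eq[of "UNIV :: bool set"] by simp
  show "Delta Q \<subseteq> {r. length r = length (fst Q)}" using length_Delta[OF assms(1)] by blast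
  show "card (Delta Q) = card {r :: bool list. length r = length (fst Q)}"
    using assms Nrows_eq_card_Delta[OF assms(1)] card_atts[OF assms(1)]
      card_lists_length_eq[of "UNIV :: bool set"] by (simp add: complete_table_def)
qed

lemma bool_list_ascent:
  assumes "length r = m" "0 < m" "\<not> r ! 0" "r ! (m - 1)"
  shows "\<exists>i < m - 1. \<not> r ! i \<and> r ! Suc i"
proof (rule ccontr)
  assume no_ascent: "\<not> ?thesis"
  have "\<not> r ! i" if "i < m" for i
    using that
  proof (induction i)
    case 0
    show ?case using assms(3) .
  next
    case (Suc i)
    then have "\<not> r ! i" "i < m - 1" by auto
    then show ?case using no_ascent by blast
  qed
  with assms(2,4) show False by simp
qed

text \<open>In a complete table with columns x_0, ..., x_(m-1) the words x_0 = 1, x_(m-1) = 0 and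
  x_i = 0 x_(i+1) = 1 cover all rows, and the rows 0...01...1 show that the m - 1 words of the last
  kind are essential.\<close>

definition ascent :: "nat list \<Rightarrow> nat \<Rightarrow> (nat \<times> bool) list" where
  "ascent cs i = [(cs ! i, False), (cs ! Suc i, True)]"

definition ascent_words :: "nat list \<Rightarrow> (nat \<times> bool) list set" where
  "ascent_words cs = {[(cs ! 0, True)], [(cs ! (length cs - 1), False)]} \<union> ascent cs ` {..<length cs - 1}"

lemma sat_ascent:
  assumes "distinct cs" "length r = length cs" "i < length cs - 1"
  shows "sat cs r (ascent cs i) \<longleftrightarrow> \<not> r ! i \<and> r ! Suc i"
  using assms val_nth[OF assms(1,2), of i] val_nth[OF assms(1,2), of "Suc i"] by (simp add: ascent_def)

lemma ascent_eq_iff: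
  assumes "distinct cs" "i < length cs - 1" "j < length cs - 1"
  shows "ascent cs i = ascent cs j \<longleftrightarrow> i = j"
  using assms nth_eq_iff_index_eq[OF assms(1), of i j] by (auto simp: ascent_def)

lemma ascent_words_cover:
  assumes "distinct cs" "2 \<le> length cs" "length r = length cs"
  shows "\<exists>w \<in> ascent_words cs. sat cs r w"
proof -
  consider "r ! 0" | "\<not> r ! (length cs - 1)" | i where "i < length cs - 1" "\<not> r ! i" "r ! Suc i"
    using bool_list_ascent[OF assms(3)] assms(2) by fastforce
  then show ?thesis
  proof cases
    case 1
    moreover have "0 < length cs" using assms(2) by linarith
    ultimately have "sat cs r [(cs ! 0, True)]" using val_nth[OF assms(1,3), of 0] by simp
    then show ?thesis unfolding ascent_words_def by blast
  next
    case 2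
    then have "sat cs r [(cs ! (length cs - 1), False)]"
      using val_nth[OF assms(1,3), of "length cs - 1"] assms(2) by simp
    then show ?thesis unfolding ascent_words_def by blast
  next
    case (3 i)
    then have "sat cs r (ascent cs i)" using sat_ascent[OF assms(1,3)] by blast
    with 3(1) show ?thesis unfolding ascent_words_def by blast
  qed
qed

lemma ascent_essential:
  assumes cs: "distinct cs" "2 \<le> length cs" and i: "i < length cs - 1"
  shows "ascent cs i \<in> essential cs {r. length r = length cs} (ascent_words cs)"
proof -
  define r where "r = map (\<lambda>j. i < j) [0..<length cs]"
  have r: "length r = length cs" and r_nth: "\<And>j. j < length cs \<Longrightarrow> r ! j \<longleftrightarrow> i < j"
    by (simp_all add: r_def)
  have "sat cs r w \<longleftrightarrow> w = ascent cs i" if w: "w \<in> ascent_words cs" for w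
  proof -
    consider "w = [(cs ! 0, True)]" | "w = [(cs ! (length cs - 1), False)]"
      | j where "j < length cs - 1" "w = ascent cs j"
      using w unfolding ascent_words_def by blast
    then show ?thesis
    proof cases
      case (3 j)
      have "\<not> i < j \<and> i < Suc j \<longleftrightarrow> j = i" by linarith
      then show ?thesis
        using 3 i sat_ascent[OF cs(1) r 3(1)] r_nth ascent_eq_iff[OF cs(1)] by auto
    next
      case 1
      have "0 < length cs" using cs(2) by linarith
      then show ?thesis using 1 r_nth[of 0] val_nth[OF cs(1) r, of 0] by (auto simp: ascent_def)
    next
      case 2
      have "length cs - 1 < length cs" "i < length cs - 1" using cs(2) i by linarith+
      then show ?thesis
        using 2 r_nth[of "length cs - 1"] val_nth[OF cs(1) r, of "length cs - 1"] by (auto simp: ascent_def)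
    qed
  qed
  moreover have "ascent cs i \<in> ascent_words cs" using i unfolding ascent_words_def by blast
  ultimately show ?thesis using r unfolding essential_def by blast
qed

lemma card_essential_ascent_words:
  assumes "distinct cs" "2 \<le> length cs"
  shows "length cs - 1 \<le> card (essential cs {r. length r = length cs} (ascent_words cs))"
proof -
  have "length cs - 1 = card (ascent cs ` {..<length cs - 1})"
    using ascent_eq_iff[OF assms(1)] by (simp add: card_image inj_on_def)
  also have "\<dots> \<le> card (essential cs {r. length r = length cs} (ascent_words cs))"
    using ascent_essential[OF assms]
    by (intro card_mono) (auto simp: essential_def ascent_words_def)
  finally show ?thesis .
qed

lemma complete_table_card_atts_le_exp_psi_d:
  assumes A: "closed_class A" and psi: "bounded_cm \<psi>" and Q: "Q \<in> A" "m_psi \<psi> Q \<le> n"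
    and complete: "complete_table Q" and two: "2 \<le> card (atts Q)"
  shows "\<exists>T' \<in> A. psi_a \<psi> T' \<le> 2 * n \<and> card (atts Q) - 1 \<le> 2 ^ psi_d \<psi> T'"
proof -
  let ?cs = "fst Q"
  have wf: "wf_table Q" using closed_class_wf[OF A Q(1)] .
  have len: "card (atts Q) = length ?cs" using card_atts[OF wf] .
  have cs: "distinct ?cs" "2 \<le> length ?cs" using wf_tableD(1)[OF wf] two len by auto
  have Delta_Q: "Delta Q = {r. length r = length ?cs}" using complete_table_Delta[OF wf complete] .
  have ends: "0 < length ?cs" "length ?cs - 1 < length ?cs" using cs(2) by linarith+
  have cost: "\<psi> [?cs ! i] \<le> n" if "i < length ?cs" for i
    using m_psi_ge[of "?cs ! i" Q \<psi>] Q(2) that by (simp add: atts_def)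
  have "\<exists>T' \<in> A. psi_a \<psi> T' \<le> 2 * n
      \<and> card (essential ?cs (Delta Q) (ascent_words ?cs)) \<le> 2 ^ psi_d \<psi> T'"
  proof (rule card_essential_le_exp_psi_d[OF A psi Q(1)])
    have "replicate (length ?cs) False \<in> Delta Q" using Delta_Q by simp
    then show "\<not> is_empty Q" by (auto simp: is_empty_iff)
    show "finite (ascent_words ?cs)" "ascent_words ?cs \<noteq> {}" by (auto simp: ascent_words_def)
    have "?cs ! i \<in> atts Q" if "i < length ?cs" for i using that by (simp add: atts_def)
    then show "ascent_words ?cs \<subseteq> words Q"
      using ends by (auto simp: ascent_words_def ascent_def words_def)
    show "psiw \<psi> w \<le> 2 * n" if "w \<in> ascent_words ?cs" for w
    proof -
      have "\<psi> [?cs ! i, ?cs ! Suc i] \<le> 2 * n" if "i < length ?cs - 1" for i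
      proof -
        have "\<psi> [?cs ! i, ?cs ! Suc i] \<le> \<psi> [?cs ! i] + \<psi> [?cs ! Suc i]"
          using partially_bounded_cmD(4)[of \<psi> "[?cs ! i]" "[?cs ! Suc i]"] psi by simp
        also have "\<dots> \<le> n + n" using cost that by (intro add_mono) auto
        finally show ?thesis by simp
      qed
      moreover have "\<psi> [?cs ! 0] \<le> 2 * n" "\<psi> [?cs ! (length ?cs - 1)] \<le> 2 * n"
        using cost[OF ends(1)] cost[OF ends(2)] by simp_all
      ultimately show ?thesis using that by (auto simp: ascent_words_def ascent_def psiw_def)
    qed
    show "\<exists>w \<in> ascent_words ?cs. sat ?cs r w" if "r \<in> Delta Q" for r
      using ascent_words_cover[OF cs] that Delta_Q by simp
  qed
  then show ?thesis using card_essential_ascent_words[OF cs] len Delta_Q le_trans by metis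
qed

lemma finite_Zt_set: "finite {card (atts Q) | Q. Q \<in> tclosure T \<and> complete_table Q}"
proof (rule finite_subset)
  show "{card (atts Q) | Q. Q \<in> tclosure T \<and> complete_table Q} \<subseteq> {..card (atts T)}"
  proof
    fix x assume "x \<in> {card (atts Q) | Q. Q \<in> tclosure T \<and> complete_table Q}"
    then obtain Q where "Q \<in> tclosure T" "x = card (atts Q)" by blast
    then show "x \<in> {..card (atts T)}" using card_mono[OF finite_atts atts_tclosure] by simp
  qed
qed simp

lemma Zt_ge:
  assumes "Q \<in> tclosure T" "complete_table Q"
  shows "card (atts Q) \<le> Zt T"
proof -
  have "finite (insert 0 {card (atts Q) | Q. Q \<in> tclosure T \<and> complete_table Q})"
    using finite_Zt_set[of T] by (simp only: finite_insert)
  moreover have "card (atts Q) \<in> insert 0 {card (atts Q) | Q. Q \<in> tclosure T \<and> complete_table Q}"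
    using assms by blast
  ultimately show ?thesis unfolding Zt_def by (rule Max_ge)
qed

lemma Zt_cases: "Zt T = 0 \<or> (\<exists>Q \<in> tclosure T. complete_table Q \<and> Zt T = card (atts Q))"
proof -
  have "finite (insert 0 {card (atts Q) | Q. Q \<in> tclosure T \<and> complete_table Q})"
    using finite_Zt_set[of T] by (simp only: finite_insert)
  then have "Zt T \<in> insert 0 {card (atts Q) | Q. Q \<in> tclosure T \<and> complete_table Q}"
    unfolding Zt_def by (rule Max_in) simp
  then show ?thesis by auto
qed

lemma Gt_ge: "irr_annihilating T \<alpha> \<Longrightarrow> length \<alpha> \<le> Gt T"
proof (cases "is_empty T")
  case True
  assume irr: "irr_annihilating T \<alpha>"
  have "\<alpha> = []"
  proof (rule ccontr)
    assume "\<alpha> \<noteq> []"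
    then have "{} \<subset> {..<length \<alpha>}" by auto
    from irr_annihilating_sub_nonempty[OF irr this] True show False
      by (simp add: is_empty_iff Delta_sub)
  qed
  then show ?thesis by simp
next
  case False
  assume irr: "irr_annihilating T \<alpha>"
  have "finite {length \<alpha> | \<alpha>. irr_annihilating T \<alpha>}"
    by (rule finite_subset[of _ "{..card (atts T)}"]) (auto dest: irr_annihilating_length_le_card_atts)
  with False irr show ?thesis unfolding Gt_def by (simp, intro Max_ge) auto
qed

lemma Gt_le:
  assumes "\<And>\<alpha>. irr_annihilating T \<alpha> \<Longrightarrow> length \<alpha> \<le> B"
  shows "Gt T \<le> B"
proof -
  have "finite {length \<alpha> | \<alpha>. irr_annihilating T \<alpha>}"
    by (rule finite_subset[of _ "{..B}"]) (use assms in auto)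
  then show ?thesis unfolding Gt_def using assms by (auto intro!: Max.boundedI)
qed

lemma finite_cheap_words:
  assumes "bounded_cm \<psi>"
  shows "finite {\<alpha> \<in> words T. psiw \<psi> \<alpha> \<le> n}"
proof (rule finite_subset)
  show "{\<alpha> \<in> words T. psiw \<psi> \<alpha> \<le> n} \<subseteq> {xs. set xs \<subseteq> atts T \<times> UNIV \<and> length xs \<le> n}"
  proof
    fix \<alpha> assume \<alpha>: "\<alpha> \<in> {\<alpha> \<in> words T. psiw \<psi> \<alpha> \<le> n}"
    then have "length \<alpha> \<le> n" using length_le_psiw[OF assms, of \<alpha>] by simp
    moreover have "set \<alpha> \<subseteq> atts T \<times> UNIV" using \<alpha> by (auto simp: words_def)
    ultimately show "\<alpha> \<in> {xs. set xs \<subseteq> atts T \<times> UNIV \<and> length xs \<le> n}" by simp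
  qed
  show "finite {xs. set xs \<subseteq> atts T \<times> (UNIV :: bool set) \<and> length xs \<le> n}"
    by (rule finite_lists_length_le) simp
qed

lemma finite_card_irr_psi_covers:
  assumes "bounded_cm \<psi>"
  shows "finite {card U | U. irr_psi_cover \<psi> T n U}"
proof (rule finite_subset)
  have "card U \<le> card {\<alpha> \<in> words T. psiw \<psi> \<alpha> \<le> n}" if "irr_psi_cover \<psi> T n U" for U
    using that by (intro card_mono[OF finite_cheap_words[OF assms]])
      (simp add: irr_psi_cover_def psi_cover_def)
  then show "{card U | U. irr_psi_cover \<psi> T n U} \<subseteq> {..card {\<alpha> \<in> words T. psiw \<psi> \<alpha> \<le> n}}"
    by blast
qed simp

lemma irr_psi_cover_Nil:
  assumes "bounded_cm \<psi>" "\<not> is_empty T"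
  shows "irr_psi_cover \<psi> T n {[]}"
proof -
  have "psi_cover \<psi> T n {[]}" using assms(1) by (simp add: psi_cover_def words_def Delta_sub)
  moreover have "\<not> psi_cover \<psi> T n V" if "V \<subset> {[]}" for V
  proof -
    have "V = {}" using that by auto
    then show ?thesis using assms(2) by (simp add: psi_cover_def is_empty_iff)
  qed
  ultimately show ?thesis by (simp add: irr_psi_cover_def)
qed

lemma l_psi_ge:
  assumes "bounded_cm \<psi>" "\<not> is_empty T" "irr_psi_cover \<psi> T n U"
  shows "card U \<le> l_psi \<psi> T n"
proof -
  have "card U \<le> Max {card U | U. irr_psi_cover \<psi> T n U}"
    by (rule Max_ge[OF finite_card_irr_psi_covers[OF assms(1)]]) (use assms(3) in blast)
  then show ?thesis using assms(2) by (simp add: l_psi_def)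
qed

lemma l_psi_le:
  assumes "bounded_cm \<psi>" "\<And>U. irr_psi_cover \<psi> T n U \<Longrightarrow> card U \<le> B"
  shows "l_psi \<psi> T n \<le> B"
proof (cases "is_empty T")
  case False
  have "{card U | U. irr_psi_cover \<psi> T n U} \<noteq> {}" using irr_psi_cover_Nil[OF assms(1) False] by blast
  then have "Max {card U | U. irr_psi_cover \<psi> T n U} \<le> B"
    using assms(2) by (intro Max.boundedI[OF finite_card_irr_psi_covers[OF assms(1)]]) auto
  then show ?thesis using False by (simp add: l_psi_def)
qed (simp add: l_psi_def)

lemma psi_cover_has_irr_subcover:
  assumes "psi_cover \<psi> T n U0"
  obtains U where "U \<subseteq> U0" "irr_psi_cover \<psi> T n U"
proof -
  define P where "P V \<longleftrightarrow> V \<subseteq> U0 \<and> psi_cover \<psi> T n V" for V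
  obtain U where U: "P U" and min: "\<And>V. P V \<Longrightarrow> card U \<le> card V"
    using ex_has_least_nat[of P U0 card] assms by (auto simp: P_def)
  have "\<not> psi_cover \<psi> T n V" if "V \<subset> U" for V
  proof
    assume "psi_cover \<psi> T n V"
    with that U have "card U \<le> card V" by (intro min) (auto simp: P_def)
    moreover have "finite U" using U by (simp add: P_def psi_cover_def)
    ultimately show False using psubset_card_mono[OF _ that] by simp
  qed
  with U show thesis using that by (auto simp: P_def irr_psi_cover_def)
qed

definition pattern :: "nat set \<Rightarrow> nat list \<Rightarrow> row \<Rightarrow> nat set" where
  "pattern C cs r = {f \<in> C. val cs r f}"

section \<open>Counting row patterns: Pajor's form of the Sauer--Shelah lemma\<close>

definition shatters :: "'a set set \<Rightarrow> 'a set \<Rightarrow> bool" where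
  "shatters F S \<longleftrightarrow> (\<lambda>A. A \<inter> S) ` F = Pow S"

lemma card_split_by_element:
  assumes F: "finite F" "F \<subseteq> Pow (insert x X)" and x: "x \<notin> X"
  shows "card F = card ((\<lambda>A. A - {x}) ` F) + card {B \<in> Pow X. B \<in> F \<and> insert x B \<in> F}"
proof -
  let ?out = "{A \<in> F. x \<notin> A}" and ?in = "{A \<in> F. x \<in> A}"
  let ?del = "(\<lambda>A. A - {x}) ` ?in"
  have "F = ?out \<union> ?in" by blast
  then have "card F = card ?out + card ?in"
    using F(1) card_Un_disjoint[of ?out ?in] by auto
  also have "card ?in = card ?del"
  proof (rule card_image[symmetric], rule inj_onI)
    fix A1 A2 assume "A1 \<in> ?in" "A2 \<in> ?in" "A1 - {x} = A2 - {x}"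
    then show "A1 = A2" by (metis CollectD insert_Diff)
  qed
  also have "card ?out + card ?del = card (?out \<union> ?del) + card (?out \<inter> ?del)"
    by (rule card_Un_Int) (use F(1) in auto)
  also have "?out \<union> ?del = (\<lambda>A. A - {x}) ` F"
  proof (intro equalityI subsetI)
    fix B assume "B \<in> (\<lambda>A. A - {x}) ` F"
    then obtain A where "A \<in> F" "B = A - {x}" by blast
    then show "B \<in> ?out \<union> ?del" by (cases "x \<in> A") auto
  qed auto
  also have "?out \<inter> ?del = {B \<in> Pow X. B \<in> F \<and> insert x B \<in> F}"
  proof (intro equalityI subsetI)
    fix B assume B: "B \<in> ?out \<inter> ?del"
    then obtain A where "A \<in> F" "x \<in> A" "B = A - {x}" by blast
    then have "insert x B = A" by auto
    with B F(2) \<open>A \<in> F\<close> show "B \<in> {B \<in> Pow X. B \<in> F \<and> insert x B \<in> F}" by auto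
  next
    fix B assume B: "B \<in> {B \<in> Pow X. B \<in> F \<and> insert x B \<in> F}"
    then have "x \<notin> B" "B = insert x B - {x}" using x by auto
    with B show "B \<in> ?out \<inter> ?del" by blast
  qed
  finally show ?thesis .
qed

lemma shattered_by_delete:
  assumes "x \<notin> X"
  shows "{S. S \<subseteq> X \<and> shatters ((\<lambda>A. A - {x}) ` F) S} \<subseteq> {S. S \<subseteq> insert x X \<and> shatters F S}"
proof
  fix S assume S: "S \<in> {S. S \<subseteq> X \<and> shatters ((\<lambda>A. A - {x}) ` F) S}"
  then have "(\<lambda>A. A \<inter> S) ` (\<lambda>A. A - {x}) ` F = (\<lambda>A. A \<inter> S) ` F"
    unfolding image_image using assms by (intro image_cong) auto
  with S show "S \<in> {S. S \<subseteq> insert x X \<and> shatters F S}" by (auto simp: shatters_def)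
qed

lemma shatters_insert:
  assumes "x \<notin> S" "\<And>B. B \<in> G \<Longrightarrow> x \<notin> B \<and> B \<in> F \<and> insert x B \<in> F" "shatters G S"
  shows "shatters F (insert x S)"
  unfolding shatters_def
proof (intro equalityI subsetI)
  fix T assume T: "T \<in> Pow (insert x S)"
  then have "T - {x} \<in> (\<lambda>A. A \<inter> S) ` G" using assms(3) by (auto simp: shatters_def)
  then obtain B where B: "B \<in> G" "T - {x} = B \<inter> S" by blast
  show "T \<in> (\<lambda>A. A \<inter> insert x S) ` F"
  proof (cases "x \<in> T")
    case True
    then have "T = insert x B \<inter> insert x S" using B(2) T by auto
    then show ?thesis using assms(2)[OF B(1)] by blast
  next
    case False
    then have "T = B \<inter> insert x S" using B(2) assms(2)[OF B(1)] by auto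
    then show ?thesis using assms(2)[OF B(1)] by blast
  qed
qed auto

lemma card_le_card_shattered:
  "finite X \<Longrightarrow> F \<subseteq> Pow X \<Longrightarrow> card F \<le> card {S. S \<subseteq> X \<and> shatters F S}"
proof (induction X arbitrary: F rule: finite_induct)
  case empty
  show ?case
  proof (cases "F = {}")
    case False
    then have F: "F = {{}}" using empty by auto
    have shattered: "{S. S \<subseteq> {} \<and> shatters {{}} S} = {{}}" by (auto simp: shatters_def)
    show ?thesis unfolding F shattered by simp
  qed simp
next
  case (insert x X)
  let ?Fdel = "(\<lambda>A. A - {x}) ` F" and ?Fboth = "{B \<in> Pow X. B \<in> F \<and> insert x B \<in> F}"
  let ?Sdel = "{S. S \<subseteq> X \<and> shatters ?Fdel S}" and ?Sboth = "{S. S \<subseteq> X \<and> shatters ?Fboth S}"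
  let ?S = "{S. S \<subseteq> insert x X \<and> shatters F S}"
  have finite_S: "finite ?S" using insert.hyps(1) by (simp add: finite_subset[of _ "Pow (insert x X)"])
  have Sdel: "?Sdel \<subseteq> ?S" by (rule shattered_by_delete[OF insert.hyps(2)])
  have Sboth: "insert x ` ?Sboth \<subseteq> ?S"
  proof
    fix S' assume "S' \<in> insert x ` ?Sboth"
    then obtain S where S: "S \<subseteq> X" "shatters ?Fboth S" "S' = insert x S" by blast
    have "shatters F (insert x S)"
      by (rule shatters_insert[OF _ _ S(2)]) (use S(1) insert.hyps(2) in auto)
    with S show "S' \<in> ?S" by blast
  qed
  have "finite F" using insert.prems insert.hyps(1) by (simp add: finite_subset[of _ "Pow (insert x X)"])
  then have "card F = card ?Fdel + card ?Fboth"
    by (rule card_split_by_element[OF _ insert.prems insert.hyps(2)])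
  also have "\<dots> \<le> card ?Sdel + card ?Sboth"
  proof (rule add_mono)
    show "card ?Fdel \<le> card ?Sdel" using insert.prems by (intro insert.IH) auto
    show "card ?Fboth \<le> card ?Sboth" by (intro insert.IH) blast
  qed
  also have "card ?Sboth = card (insert x ` ?Sboth)"
  proof (rule card_image[symmetric], rule inj_onI)
    fix S1 S2 assume "S1 \<in> ?Sboth" "S2 \<in> ?Sboth" "insert x S1 = insert x S2"
    moreover have "x \<notin> S1" "x \<notin> S2" using calculation(1,2) insert.hyps(2) by auto
    ultimately show "S1 = S2" by (metis insert_ident)
  qed
  also have "card ?Sdel + \<dots> = card (?Sdel \<union> insert x ` ?Sboth)"
    using insert.hyps(2) finite_subset[OF Sdel finite_S] finite_subset[OF Sboth finite_S]
    by (intro card_Un_disjoint[symmetric]) auto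
  also have "\<dots> \<le> card ?S" using Sdel Sboth by (intro card_mono[OF finite_S]) auto
  finally show ?case .
qed

lemma card_subsets_card_le:
  assumes "finite X"
  shows "card {S. S \<subseteq> X \<and> card S \<le> z} \<le> (card X + 1) ^ z"
proof (induction z)
  case 0
  have "{S. S \<subseteq> X \<and> card S \<le> 0} = {{}}"
    using assms by (auto simp: card_eq_0_iff rev_finite_subset)
  then show ?case by simp
next
  case (Suc z)
  let ?Sz = "{S. S \<subseteq> X \<and> card S \<le> z}" and ?ins = "\<lambda>(x, S). insert x S"
  have finite_Sz: "finite ?Sz" using assms by (simp add: finite_subset[of _ "Pow X"])
  have "{S. S \<subseteq> X \<and> card S \<le> Suc z} \<subseteq> ?Sz \<union> ?ins ` (X \<times> ?Sz)"
  proof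
    fix S assume S: "S \<in> {S. S \<subseteq> X \<and> card S \<le> Suc z}"
    show "S \<in> ?Sz \<union> ?ins ` (X \<times> ?Sz)"
    proof (cases "card S \<le> z")
      case False
      with S have "card S = Suc z" by simp
      then obtain x where x: "x \<in> S" by (metis card.empty ex_in_conv nat.simps(3))
      have "finite S" using S assms by (auto intro: finite_subset)
      then have "(x, S - {x}) \<in> X \<times> ?Sz" using S x \<open>card S = Suc z\<close> by auto
      moreover have "S = ?ins (x, S - {x})" using x by auto
      ultimately show ?thesis by blast
    qed (use S in blast)
  qed
  then have "card {S. S \<subseteq> X \<and> card S \<le> Suc z} \<le> card (?Sz \<union> ?ins ` (X \<times> ?Sz))"
    by (rule card_mono[rotated]) (use finite_Sz assms in simp)
  also have "\<dots> \<le> card ?Sz + card (?ins ` (X \<times> ?Sz))" by (rule card_Un_le)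
  also have "\<dots> \<le> card ?Sz + card (X \<times> ?Sz)"
    using card_image_le[of "X \<times> ?Sz" ?ins] finite_Sz assms by simp
  also have "\<dots> = card ?Sz * (card X + 1)" by (simp add: card_cartesian_product)
  also have "\<dots> \<le> (card X + 1) ^ z * (card X + 1)" using Suc.IH by (rule mult_right_mono) simp
  finally show ?case by (simp add: mult.commute)
qed

lemma card_image_eq_if_same_kernel:
  assumes "\<And>x y. x \<in> R \<Longrightarrow> y \<in> R \<Longrightarrow> f x = f y \<longleftrightarrow> g x = g y"
  shows "card (f ` R) = card (g ` R)"
proof -
  let ?h = "\<lambda>a. g (inv_into R f a)"
  have inv: "inv_into R f (f x) \<in> R" "f (inv_into R f (f x)) = f x" if "x \<in> R" for x
    using that by (auto intro: inv_into_into f_inv_into_f)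
  then have h: "?h (f x) = g x" if "x \<in> R" for x
    using assms that by blast
  have "inj_on ?h (f ` R)"
  proof (rule inj_onI)
    fix a b assume "a \<in> f ` R" "b \<in> f ` R" "?h a = ?h b"
    then obtain x y where "x \<in> R" "y \<in> R" "a = f x" "b = f y" "g x = g y" using h by auto
    then show "a = b" using assms by blast
  qed
  moreover have "?h ` f ` R = g ` R" using h by (auto simp: image_image)
  ultimately have "bij_betw ?h (f ` R) (g ` R)" by (simp add: bij_betw_def)
  then show ?thesis by (rule bij_betw_same_card)
qed

text \<open>A set of columns shattered by the row patterns carries a complete table of the closure.\<close>

lemma card_shattered_le_Zt:
  assumes A: "closed_class A" and T: "T \<in> A" and S: "S \<subseteq> C" "C \<subseteq> atts T" "S \<noteq> {}"
    and shatters: "shatters (pattern C (fst T) ` Delta T) S"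
  shows "card S \<le> Zt (restrict S T)"
proof -
  let ?R = "restrict S T"
  have S_atts: "S \<subseteq> atts T" using S by blast
  have wf: "wf_table T" using closed_class_wf[OF A T] .
  have R: "?R \<in> A" "atts ?R = S" "wf_table ?R"
    using restrict_mem[OF A T S_atts S(3)] atts_restrict[OF A T S_atts S(3)] closed_class_wf[OF A]
    by auto
  have "card (Delta ?R) = card ((\<lambda>r. pattern C (fst T) r \<inter> S) ` Delta T)"
    unfolding Delta_restrict[OF A T S_atts S(3)]
  proof (rule card_image_eq_if_same_kernel)
    fix r r' assume r: "r \<in> Delta T" "r' \<in> Delta T"
    have "pattern C (fst T) r \<inter> S = pattern C (fst T) r' \<inter> S
        \<longleftrightarrow> (\<forall>f \<in> S \<inter> atts T. val (fst T) r f = val (fst T) r' f)"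
      using S_atts S(1) unfolding pattern_def by blast
    then show "proj_row (fst T) (atts T - S) r = proj_row (fst T) (atts T - S) r'
        \<longleftrightarrow> pattern C (fst T) r \<inter> S = pattern C (fst T) r' \<inter> S"
      using proj_row_eq_iff[OF wf r] by simp
  qed
  also have "(\<lambda>r. pattern C (fst T) r \<inter> S) ` Delta T = Pow S"
    using shatters by (simp add: shatters_def image_image)
  finally have "card (Delta ?R) = 2 ^ card S"
    using S_atts by (simp add: card_Pow finite_subset)
  then have "complete_table ?R" using R by (simp add: complete_table_def Nrows_eq_card_Delta)
  moreover have "?R \<in> tclosure ?R"
    using R S(3) by (intro tclosure_self) (auto simp: atts_def)
  ultimately show ?thesis using Zt_ge R(2) by metis
qed

lemma card_patterns_le:
  assumes A: "closed_class A" and T: "T \<in> A" and C: "C \<subseteq> atts T" "\<And>f. f \<in> C \<Longrightarrow> \<psi> [f] \<le> n"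
    and Z: "\<And>Q. Q \<in> A \<Longrightarrow> m_psi \<psi> Q \<le> n \<Longrightarrow> Zt Q \<le> z"
  shows "card (pattern C (fst T) ` Delta T) \<le> (card C + 1) ^ z"
proof -
  have finite_C: "finite C" using C(1) by (rule finite_subset) simp
  have "card (pattern C (fst T) ` Delta T) \<le> card {S. S \<subseteq> C \<and> shatters (pattern C (fst T) ` Delta T) S}"
    by (rule card_le_card_shattered[OF finite_C]) (auto simp: pattern_def)
  also have "\<dots> \<le> card {S. S \<subseteq> C \<and> card S \<le> z}"
  proof (intro card_mono subsetI)
    show "finite {S. S \<subseteq> C \<and> card S \<le> z}" using finite_C by (simp add: finite_subset[of _ "Pow C"])
    fix S assume S: "S \<in> {S. S \<subseteq> C \<and> shatters (pattern C (fst T) ` Delta T) S}"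
    show "S \<in> {S. S \<subseteq> C \<and> card S \<le> z}"
    proof (cases "S = {}")
      case False
      have "S \<subseteq> atts T" using S C(1) by blast
      then have "restrict S T \<in> A" "atts (restrict S T) = S"
        using restrict_mem[OF A T _ False] atts_restrict[OF A T _ False] by auto
      then have "Zt (restrict S T) \<le> z" using S C(2) by (intro Z m_psi_le) auto
      then show ?thesis using S C(1) card_shattered_le_Zt[OF A T _ C(1) False] by fastforce
    qed simp
  qed
  also have "\<dots> \<le> (card C + 1) ^ z" by (rule card_subsets_card_le[OF finite_C])
  finally show ?thesis .
qed

section \<open>A halving strategy\<close>

lemma minority_card_le_half:
  assumes "finite S"
  shows "2 * card {p \<in> S. P p \<noteq> (card S \<le> 2 * card {p \<in> S. P p})} \<le> card S"
proof -
  have "card {p \<in> S. P p} + card {p \<in> S. \<not> P p} = card ({p \<in> S. P p} \<union> {p \<in> S. \<not> P p})"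
    by (rule card_Un_disjoint[symmetric]) (use assms in auto)
  also have "\<dots> = card S" by (rule arg_cong[where f = card]) blast
  finally have "card {p \<in> S. P p} + card {p \<in> S. \<not> P p} = card S" .
  then show ?thesis by (cases "card S \<le> 2 * card {p \<in> S. P p}") auto
qed

lemma sat_if_same_pattern:
  assumes "fst ` set w \<subseteq> C" "pattern C cs r = pattern C cs r'" "sat cs r w"
  shows "sat cs r' w"
  unfolding sat_def
proof (intro ballI, clarify)
  fix f \<delta> assume "(f, \<delta>) \<in> set w"
  moreover from this have "f \<in> C" using assms(1) by force
  then have "val cs r f = val cs r' f"
    using assms(2) unfolding pattern_def set_eq_iff by blast
  ultimately show "val cs r' f = \<delta>" using assms(3) by (auto simp: sat_def)
qed

locale halving =
  fixes T :: dtable and \<psi> :: "nat list \<Rightarrow> nat" and C :: "nat set"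
    and U :: "(nat \<times> bool) list set" and c :: nat
  assumes bounded: "bounded_cm \<psi>"
    and U_cols: "\<And>\<alpha>. \<alpha> \<in> U \<Longrightarrow> fst ` set \<alpha> \<subseteq> C"
    and U_cost: "\<And>\<alpha>. \<alpha> \<in> U \<Longrightarrow> psiw \<psi> \<alpha> \<le> c"
    and U_decision: "\<And>\<alpha>. \<alpha> \<in> U \<Longrightarrow> PiT (sub T \<alpha>) \<noteq> {}"
    and U_cover: "\<And>r. r \<in> Delta T \<Longrightarrow> \<exists>\<alpha> \<in> U. sat (fst T) r \<alpha>"
    and refuting_word: "\<And>s. s \<subseteq> C \<Longrightarrow> s \<notin> pattern C (fst T) ` Delta T \<Longrightarrow>
      \<exists>\<gamma>. fst ` set \<gamma> \<subseteq> C \<and> (\<forall>x \<in> set \<gamma>. snd x = (fst x \<in> s)) \<and> psiw \<psi> \<gamma> \<le> c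
        \<and> (\<forall>r \<in> Delta T. \<not> sat (fst T) r \<gamma>)"
begin

definition decides :: "(nat \<times> bool) list \<Rightarrow> dtree \<Rightarrow> bool" where
  "decides \<beta> t \<longleftrightarrow> wf_dt t \<and> det_dt t \<and> (\<forall>g. att_in t g \<longrightarrow> g \<in> C)
     \<and> (\<forall>r \<in> Delta (sub T \<beta>). \<exists>w d. dpath t w d \<and> sat (fst T) r w)
     \<and> (\<forall>w d. dpath t w d \<longrightarrow> is_empty (sub T (\<beta> @ w)) \<or> d \<in> PiT (sub T (\<beta> @ w)))"

definition solves :: "(nat \<times> bool) list \<Rightarrow> nat \<Rightarrow> dtree \<Rightarrow> bool" where
  "solves \<beta> k t \<longleftrightarrow> decides \<beta> t \<and> (\<forall>w d. dpath t w d \<longrightarrow> psiw \<psi> w \<le> k * c)"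

lemma decides_Leaf: "is_empty (sub T \<beta>) \<or> d \<in> PiT (sub T \<beta>) \<Longrightarrow> decides \<beta> (Leaf d)"
  unfolding decides_def by (auto intro: wf_dt.intros det_dt.intros)

lemma decides_Node:
  assumes "f \<in> C" "decides (\<beta> @ [(f, \<delta>)]) t1" "decides (\<beta> @ [(f, \<not> \<delta>)]) t2"
  shows "decides \<beta> (Node f [(\<delta>, t1), (\<not> \<delta>, t2)])"
  unfolding decides_def
proof (intro conjI allI impI ballI)
  show "wf_dt (Node f [(\<delta>, t1), (\<not> \<delta>, t2)])" "det_dt (Node f [(\<delta>, t1), (\<not> \<delta>, t2)])"
    using assms(2,3) unfolding decides_def by (auto intro!: wf_dt.intros det_dt.intros)
  show "att_in (Node f [(\<delta>, t1), (\<not> \<delta>, t2)]) g \<Longrightarrow> g \<in> C" for g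
    using assms unfolding decides_def by auto
  show "\<exists>w d. dpath (Node f [(\<delta>, t1), (\<not> \<delta>, t2)]) w d \<and> sat (fst T) r w" if "r \<in> Delta (sub T \<beta>)" for r
  proof (cases "val (fst T) r f = \<delta>")
    case True
    with that have "r \<in> Delta (sub T (\<beta> @ [(f, \<delta>)]))" by (simp add: Delta_sub)
    then obtain w d where "dpath t1 w d" "sat (fst T) r w"
      using assms(2) unfolding decides_def by blast
    with True show ?thesis by (intro exI[of _ "(f, \<delta>) # w"]) auto
  next
    case False
    with that have "r \<in> Delta (sub T (\<beta> @ [(f, \<not> \<delta>)]))" by (simp add: Delta_sub)
    then obtain w d where "dpath t2 w d" "sat (fst T) r w"
      using assms(3) unfolding decides_def by blast
    with False show ?thesis by (intro exI[of _ "(f, \<not> \<delta>) # w"]) auto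
  qed
  show "is_empty (sub T (\<beta> @ w)) \<or> d \<in> PiT (sub T (\<beta> @ w))"
    if "dpath (Node f [(\<delta>, t1), (\<not> \<delta>, t2)]) w d" for w d
    using that assms(2,3) unfolding decides_def by auto
qed

lemma solves_if_one_pattern:
  assumes "card (pattern C (fst T) ` Delta (sub T \<beta>)) \<le> 1"
  shows "\<exists>t. solves \<beta> k t"
proof (cases "is_empty (sub T \<beta>)")
  case True
  then have "solves \<beta> k (Leaf 0)" using decides_Leaf bounded by (simp add: solves_def)
  then show ?thesis by blast
next
  case False
  then obtain r0 where r0: "r0 \<in> Delta (sub T \<beta>)" by (auto simp: is_empty_iff)
  have same: "pattern C (fst T) r = pattern C (fst T) r0" if "r \<in> Delta (sub T \<beta>)" for r
  proof -
    have "finite (pattern C (fst T) ` Delta (sub T \<beta>))" by simp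
    moreover have "card (pattern C (fst T) ` Delta (sub T \<beta>)) \<le> Suc 0" using assms by simp
    ultimately show ?thesis using card_le_Suc0_iff_eq that r0 by blast
  qed
  have "r0 \<in> Delta T" using r0 by (simp add: Delta_sub)
  then obtain \<alpha> where \<alpha>: "\<alpha> \<in> U" "sat (fst T) r0 \<alpha>" using U_cover by blast
  obtain d where d: "d \<in> PiT (sub T \<alpha>)" using U_decision[OF \<alpha>(1)] by blast
  have "d \<in> PiT (sub T \<beta>)"
  proof (rule PiT_sub_mono[OF _ d])
    fix r assume "r \<in> Delta T" "sat (fst T) r \<beta>"
    then show "sat (fst T) r \<alpha>"
      using sat_if_same_pattern[OF U_cols[OF \<alpha>(1)] same[symmetric] \<alpha>(2)] by (simp add: Delta_sub)
  qed
  then have "solves \<beta> k (Leaf d)" using decides_Leaf bounded by (simp add: solves_def)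
  then show ?thesis by blast
qed

lemma consistent_word_exists:
  assumes "s \<subseteq> C"
  obtains ls d where "fst ` set ls \<subseteq> C" "\<forall>x \<in> set ls. snd x = (fst x \<in> s)" "psiw \<psi> ls \<le> c"
    "is_empty (sub T (\<beta> @ ls)) \<or> d \<in> PiT (sub T (\<beta> @ ls))"
proof (cases "s \<in> pattern C (fst T) ` Delta T")
  case True
  then obtain r where r: "r \<in> Delta T" "pattern C (fst T) r = s" by blast
  obtain \<alpha> where \<alpha>: "\<alpha> \<in> U" "sat (fst T) r \<alpha>" using U_cover[OF r(1)] by blast
  have "\<forall>x \<in> set \<alpha>. snd x = (fst x \<in> s)"
    using \<alpha> U_cols[OF \<alpha>(1)] r(2) by (auto simp: sat_def pattern_def)
  moreover obtain d where "d \<in> PiT (sub T \<alpha>)" using U_decision[OF \<alpha>(1)] by blast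
  then have "d \<in> PiT (sub T (\<beta> @ \<alpha>))" by (rule PiT_sub_mono[rotated]) simp
  ultimately show thesis using that U_cols[OF \<alpha>(1)] U_cost[OF \<alpha>(1)] by blast
next
  case False
  then obtain \<gamma> where "fst ` set \<gamma> \<subseteq> C" "\<forall>x \<in> set \<gamma>. snd x = (fst x \<in> s)" "psiw \<psi> \<gamma> \<le> c"
    "\<forall>r \<in> Delta T. \<not> sat (fst T) r \<gamma>"
    using refuting_word[OF assms] by blast
  moreover from this(4) have "is_empty (sub T (\<beta> @ \<gamma>))" by (simp add: is_empty_iff Delta_sub)
  ultimately show thesis using that by blast
qed

text \<open>The prefix form of the paths is what bounds their cost by psiw \<psi> ls + k c.\<close>

lemma spine_tree_exists:
  assumes branch: "\<And>\<beta>' f. f \<in> C \<Longrightarrow> Delta (sub T \<beta>') \<subseteq> Delta (sub T \<beta>0) \<Longrightarrow>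
      \<exists>t. solves (\<beta>' @ [(f, f \<notin> s)]) k t"
  shows "Delta (sub T \<beta>) \<subseteq> Delta (sub T \<beta>0) \<Longrightarrow> fst ` set ls \<subseteq> C \<Longrightarrow> \<forall>x \<in> set ls. snd x = (fst x \<in> s)
    \<Longrightarrow> is_empty (sub T (\<beta> @ ls)) \<or> d \<in> PiT (sub T (\<beta> @ ls))
    \<Longrightarrow> \<exists>t. decides \<beta> t \<and> (\<forall>w d'. dpath t w d' \<longrightarrow>
          (\<exists>u v. w = u @ v \<and> prefix (map fst u) (map fst ls) \<and> psiw \<psi> v \<le> k * c))"
proof (induction ls arbitrary: \<beta>)
  case Nil
  then have "decides \<beta> (Leaf d)" by (simp add: decides_Leaf)
  then show ?case using bounded by (intro exI[of _ "Leaf d"]) auto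
next
  case (Cons x ls)
  obtain f where x: "x = (f, f \<in> s)" "f \<in> C" using Cons.prems(2,3) by (cases x) auto
  have "\<exists>t. decides (\<beta> @ [x]) t \<and> (\<forall>w d'. dpath t w d' \<longrightarrow>
      (\<exists>u v. w = u @ v \<and> prefix (map fst u) (map fst ls) \<and> psiw \<psi> v \<le> k * c))"
  proof (rule Cons.IH)
    show "Delta (sub T (\<beta> @ [x])) \<subseteq> Delta (sub T \<beta>0)"
      using Cons.prems(1) by (auto simp: Delta_sub)
    show "is_empty (sub T ((\<beta> @ [x]) @ ls)) \<or> d \<in> PiT (sub T ((\<beta> @ [x]) @ ls))"
      using Cons.prems(4) by simp
  qed (use Cons.prems(2,3) in auto)
  then obtain t1 where t1: "decides (\<beta> @ [x]) t1"
    "\<And>w d'. dpath t1 w d' \<Longrightarrow> \<exists>u v. w = u @ v \<and> prefix (map fst u) (map fst ls) \<and> psiw \<psi> v \<le> k * c"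
    by blast
  obtain t2 where t2: "solves (\<beta> @ [(f, f \<notin> s)]) k t2" using branch[OF x(2) Cons.prems(1)] by blast
  let ?t = "Node f [(f \<in> s, t1), (f \<notin> s, t2)]"
  have "decides \<beta> ?t" using decides_Node[OF x(2)] t1(1) t2 x(1) by (simp add: solves_def)
  moreover have "\<exists>u v. w = u @ v \<and> prefix (map fst u) (map fst (x # ls)) \<and> psiw \<psi> v \<le> k * c"
    if path: "dpath ?t w d'" for w d'
  proof -
    consider w1 where "w = (f, f \<in> s) # w1" "dpath t1 w1 d'" | w2 where "w = (f, f \<notin> s) # w2" "dpath t2 w2 d'"
      using path by auto
    then show ?thesis
    proof cases
      case (1 w1)
      then obtain u v where "w1 = u @ v" "prefix (map fst u) (map fst ls)" "psiw \<psi> v \<le> k * c"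
        using t1(2) by blast
      with 1 x(1) show ?thesis by (intro exI[of _ "(f, f \<in> s) # u"] exI[of _ v]) auto
    next
      case (2 w2)
      with t2 x(1) show ?thesis
        by (intro exI[of _ "[(f, f \<notin> s)]"] exI[of _ w2]) (auto simp: solves_def)
    qed
  qed
  ultimately show ?case by blast
qed

lemma card_patterns_minority_le:
  assumes "f \<in> C" "Delta (sub T \<beta>') \<subseteq> Delta (sub T \<beta>)"
  defines "S \<equiv> pattern C (fst T) ` Delta (sub T \<beta>)"
  shows "2 * card (pattern C (fst T) ` Delta (sub T (\<beta>' @ [(f, \<not> (card S \<le> 2 * card {p \<in> S. f \<in> p}))])))
    \<le> card S"
proof -
  let ?maj = "card S \<le> 2 * card {p \<in> S. f \<in> p}"
  have "pattern C (fst T) ` Delta (sub T (\<beta>' @ [(f, \<not> ?maj)])) \<subseteq> {p \<in> S. (f \<in> p) \<noteq> ?maj}"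
    using assms(1,2) unfolding S_def by (auto simp: Delta_sub pattern_def)
  then have "card (pattern C (fst T) ` Delta (sub T (\<beta>' @ [(f, \<not> ?maj)]))) \<le> card {p \<in> S. (f \<in> p) \<noteq> ?maj}"
    by (rule card_mono[rotated]) (simp add: S_def)
  moreover have "2 * card {p \<in> S. (f \<in> p) \<noteq> ?maj} \<le> card S"
    using minority_card_le_half[of S "\<lambda>p. f \<in> p"] by (simp add: S_def)
  ultimately show ?thesis by linarith
qed

lemma solves_exists: "card (pattern C (fst T) ` Delta (sub T \<beta>)) \<le> 2 ^ k \<Longrightarrow> \<exists>t. solves \<beta> k t"
proof (induction k arbitrary: \<beta>)
  case 0
  then show ?case using solves_if_one_pattern by simp
next
  case (Suc k)
  define S where "S = pattern C (fst T) ` Delta (sub T \<beta>)"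
  define s where "s = {f \<in> C. card S \<le> 2 * card {p \<in> S. f \<in> p}}"
  have branch: "\<exists>t. solves (\<beta>' @ [(f, f \<notin> s)]) k t"
    if "f \<in> C" "Delta (sub T \<beta>') \<subseteq> Delta (sub T \<beta>)" for \<beta>' f
  proof (rule Suc.IH)
    have "(f \<notin> s) = (\<not> card S \<le> 2 * card {p \<in> S. f \<in> p})" using that(1) by (simp add: s_def)
    then have "2 * card (pattern C (fst T) ` Delta (sub T (\<beta>' @ [(f, f \<notin> s)]))) \<le> card S"
      using card_patterns_minority_le[OF that] by (simp only: S_def)
    moreover have "card S \<le> 2 * 2 ^ k" using Suc.prems by (simp add: S_def)
    ultimately show "card (pattern C (fst T) ` Delta (sub T (\<beta>' @ [(f, f \<notin> s)]))) \<le> 2 ^ k"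
      by linarith
  qed
  have "s \<subseteq> C" by (auto simp: s_def)
  then obtain ls d where ls: "fst ` set ls \<subseteq> C" "\<forall>x \<in> set ls. snd x = (fst x \<in> s)" "psiw \<psi> ls \<le> c"
    "is_empty (sub T (\<beta> @ ls)) \<or> d \<in> PiT (sub T (\<beta> @ ls))"
    by (rule consistent_word_exists)
  obtain t where t: "decides \<beta> t"
    "\<And>w d'. dpath t w d' \<Longrightarrow> \<exists>u v. w = u @ v \<and> prefix (map fst u) (map fst ls) \<and> psiw \<psi> v \<le> k * c"
    using spine_tree_exists[OF branch _ ls(1,2,4)] by blast
  have "psiw \<psi> w \<le> Suc k * c" if path: "dpath t w d'" for w d'
  proof -
    obtain u v where uv: "w = u @ v" "prefix (map fst u) (map fst ls)" "psiw \<psi> v \<le> k * c"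
      using t(2)[OF path] by blast
    have "psiw \<psi> w \<le> psiw \<psi> u + psiw \<psi> v" unfolding uv(1) using psiw_append_le bounded by simp
    also have "psiw \<psi> u \<le> psiw \<psi> ls" using psi_prefix_le[OF _ uv(2)] bounded by (simp add: psiw_def)
    finally show ?thesis using ls(3) uv(3) by simp
  qed
  with t(1) show ?case by (auto simp: solves_def)
qed

lemma psi_d_le_halving:
  assumes "C \<subseteq> atts T" "card (pattern C (fst T) ` Delta T) \<le> 2 ^ k"
  shows "psi_d \<psi> T \<le> k * c"
proof -
  have Delta_Nil: "Delta (sub T []) = Delta T" by (simp add: Delta_sub)
  obtain t where t: "decides [] t" "\<And>w d. dpath t w d \<Longrightarrow> psiw \<psi> w \<le> k * c"
    using solves_exists[of "[]" k] assms(2) unfolding Delta_Nil solves_def by blast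
  have "det_tree T [t]"
    using t(1) assms(1) unfolding det_tree_def nd_tree_def two_tree_def decides_def Delta_Nil
    by (auto simp: tree_atts_single cpath_single Delta_sub)
  then have "psi_d \<psi> T \<le> psi_tree \<psi> [t]" by (rule psi_d_le)
  also have "\<dots> \<le> k * c"
    using \<open>det_tree T [t]\<close> t(2) by (intro psi_tree_le) (auto simp: det_tree_def nd_tree_def cpath_single)
  finally show ?thesis .
qed

end

section \<open>The upper bound\<close>

lemma irr_cover_from_nd_tree:
  assumes "wf_table T" "\<not> is_empty T" "psi_a \<psi> T \<le> n"
  obtains U where "irr_psi_cover \<psi> T n U" "\<And>\<alpha>. \<alpha> \<in> U \<Longrightarrow> PiT (sub T \<alpha>) \<noteq> {}"
proof -
  obtain \<Gamma> where \<Gamma>: "nd_tree T \<Gamma>" "psi_a \<psi> T = psi_tree \<psi> \<Gamma>"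
    using psi_a_attained[OF assms(1,2)] by blast
  define U0 where "U0 = {w. (\<exists>d. cpath \<Gamma> w d) \<and> \<not> is_empty (sub T w)}"
  have decision: "PiT (sub T w) \<noteq> {}" if "w \<in> U0" for w
    using that \<Gamma>(1) unfolding U0_def nd_tree_def by blast
  have "w \<in> words T" if path: "cpath \<Gamma> w d" for w d
  proof -
    obtain t where t: "t \<in> set \<Gamma>" "dpath t w d" using path by (auto simp: cpath_def)
    have "f \<in> tree_atts \<Gamma>" if "(f, \<delta>) \<in> set w" for f \<delta>
      using att_in_if_dpath[OF t(2) that] t(1) by (auto simp: tree_atts_def)
    then have "fst ` set w \<subseteq> tree_atts \<Gamma>" by force
    then show ?thesis using \<Gamma>(1) by (auto simp: nd_tree_def words_def)
  qed
  moreover have "psiw \<psi> w \<le> n" if "cpath \<Gamma> w d" for w d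
    using psi_tree_ge[OF that, of \<psi>] \<Gamma>(2) assms(3) by simp
  moreover have "\<exists>w \<in> U0. r \<in> Delta (sub T w)" if r: "r \<in> Delta T" for r
  proof -
    obtain w d where "cpath \<Gamma> w d" "r \<in> Delta (sub T w)" using \<Gamma>(1) r unfolding nd_tree_def by blast
    then show ?thesis by (auto simp: U0_def is_empty_iff)
  qed
  ultimately have "psi_cover \<psi> T n U0"
    unfolding psi_cover_def U0_def using finite_subset[OF _ finite_cpaths[of \<Gamma>]]
    by (auto simp: Delta_sub)
  then obtain U where "U \<subseteq> U0" "irr_psi_cover \<psi> T n U" by (rule psi_cover_has_irr_subcover)
  with that decision show thesis by blast
qed

lemma card_cover_atts_le:
  assumes "bounded_cm \<psi>" "finite U" "\<And>\<alpha>. \<alpha> \<in> U \<Longrightarrow> psiw \<psi> \<alpha> \<le> n"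
  shows "card (\<Union>\<alpha> \<in> U. fst ` set \<alpha>) \<le> card U * n"
proof -
  have "card (\<Union>\<alpha> \<in> U. fst ` set \<alpha>) \<le> (\<Sum>\<alpha> \<in> U. card (fst ` set \<alpha>))" by (rule card_UN_le[OF assms(2)])
  also have "\<dots> \<le> (\<Sum>\<alpha> \<in> U. n)"
  proof (rule sum_mono)
    fix \<alpha> assume "\<alpha> \<in> U"
    have "card (fst ` set \<alpha>) \<le> length \<alpha>" using card_image_le[of "set \<alpha>" fst] card_length[of \<alpha>] by simp
    also have "\<dots> \<le> n" using length_le_psiw[OF assms(1)] assms(3)[OF \<open>\<alpha> \<in> U\<close>] order_trans by blast
    finally show "card (fst ` set \<alpha>) \<le> n" .
  qed
  finally show ?thesis by simp
qed

lemma irr_annihilating_restrict: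
  assumes A: "closed_class A" and T: "T \<in> A" and C: "C \<subseteq> atts T" "C \<noteq> {}"
    and \<gamma>: "fst ` set \<gamma> \<subseteq> C" "\<And>x y. x \<in> set \<gamma> \<Longrightarrow> y \<in> set \<gamma> \<Longrightarrow> fst x = fst y \<Longrightarrow> x = y"
    and refutes: "\<forall>r \<in> Delta T. \<not> sat (fst T) r \<gamma>"
    and shortest: "\<And>\<gamma>'. set \<gamma>' \<subseteq> set \<gamma> \<Longrightarrow> \<forall>r \<in> Delta T. \<not> sat (fst T) r \<gamma>' \<Longrightarrow> length \<gamma> \<le> length \<gamma>'"
  shows "irr_annihilating (restrict C T) \<gamma>"
proof -
  have empty_iff: "is_empty (sub (restrict C T) w) \<longleftrightarrow> (\<forall>r \<in> Delta T. \<not> sat (fst T) r w)"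
    if "set w \<subseteq> set \<gamma>" for w
  proof -
    have "fst ` set w \<subseteq> C" using that \<gamma>(1) by auto
    from Delta_sub_restrict[OF A T C this]
    have "is_empty (sub (restrict C T) w) \<longleftrightarrow> Delta (sub T w) = {}" by (simp add: is_empty_iff)
    then show ?thesis by (auto simp: Delta_sub)
  qed
  have "\<gamma> \<in> words (restrict C T)"
    using \<gamma>(1) atts_restrict[OF A T C] by (simp add: words_def)
  moreover have "is_empty (sub (restrict C T) \<gamma>)" using empty_iff[of \<gamma>] refutes by simp
  moreover have "\<delta> = \<sigma>" if "(f, \<delta>) \<in> set \<gamma>" "(f, \<sigma>) \<in> set \<gamma>" for f \<delta> \<sigma>
    using \<gamma>(2)[OF that] by simp
  ultimately have "annihilating (restrict C T) \<gamma>" unfolding annihilating_def by blast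
  moreover have "\<not> annihilating (restrict C T) (nths \<gamma> I)" if I: "I \<subset> {..<length \<gamma>}" for I
  proof
    assume "annihilating (restrict C T) (nths \<gamma> I)"
    then have "\<forall>r \<in> Delta T. \<not> sat (fst T) r (nths \<gamma> I)"
      using empty_iff[OF set_nths_subset] by (simp add: annihilating_def)
    then have "length \<gamma> \<le> length (nths \<gamma> I)" by (rule shortest[OF set_nths_subset])
    moreover have "{i. i < length \<gamma> \<and> i \<in> I} = I" using I by auto
    then have "length (nths \<gamma> I) = card I" by (simp add: length_nths)
    moreover have "card I < length \<gamma>" using psubset_card_mono[OF _ I] by simp
    ultimately show False by simp
  qed
  ultimately show ?thesis by (simp add: irr_annihilating_def)
qed

lemma refuting_word_exists:
  assumes A: "closed_class A" and psi: "bounded_cm \<psi>" and T: "T \<in> A" "\<not> is_empty T"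
    and C: "C \<subseteq> atts T" "\<And>f. f \<in> C \<Longrightarrow> \<psi> [f] \<le> n"
    and G: "\<And>Q. Q \<in> A \<Longrightarrow> m_psi \<psi> Q \<le> n \<Longrightarrow> Gt Q \<le> g"
    and s: "s \<subseteq> C" "s \<notin> pattern C (fst T) ` Delta T"
  shows "\<exists>\<gamma>. fst ` set \<gamma> \<subseteq> C \<and> (\<forall>x \<in> set \<gamma>. snd x = (fst x \<in> s)) \<and> psiw \<psi> \<gamma> \<le> g * n
    \<and> (\<forall>r \<in> Delta T. \<not> sat (fst T) r \<gamma>)"
proof -
  obtain cl where cl: "set cl = C" using finite_list[OF finite_subset[OF C(1) finite_atts]] by blast
  define full where "full = map (\<lambda>f. (f, f \<in> s)) cl"
  define refutes where "refutes \<gamma> \<longleftrightarrow> set \<gamma> \<subseteq> set full \<and> (\<forall>r \<in> Delta T. \<not> sat (fst T) r \<gamma>)" for \<gamma>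
  have "\<not> sat (fst T) r full" if "r \<in> Delta T" for r
  proof
    assume "sat (fst T) r full"
    then have "pattern C (fst T) r = s" using cl s(1) by (auto simp: full_def sat_def pattern_def)
    with s(2) that show False by blast
  qed
  then have "refutes full" by (simp add: refutes_def)
  then obtain \<gamma> where \<gamma>: "refutes \<gamma>" and shortest: "\<And>\<gamma>'. refutes \<gamma>' \<Longrightarrow> length \<gamma> \<le> length \<gamma>'"
    using ex_has_least_nat[of refutes full length] by blast
  have letters: "fst ` set \<gamma> \<subseteq> C" "\<forall>x \<in> set \<gamma>. snd x = (fst x \<in> s)"
    using \<gamma> cl by (auto simp: refutes_def full_def)
  have "C \<noteq> {}"
  proof
    assume "C = {}"
    then have "\<gamma> = []" using letters(1) by auto
    with \<gamma> T(2) show False by (auto simp: refutes_def is_empty_iff)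
  qed
  have "irr_annihilating (restrict C T) \<gamma>"
  proof (rule irr_annihilating_restrict[OF A T(1) C(1) \<open>C \<noteq> {}\<close> letters(1)])
    show "x = y" if "x \<in> set \<gamma>" "y \<in> set \<gamma>" "fst x = fst y" for x y
      using that letters(2) by (simp add: prod_eq_iff)
    show "\<forall>r \<in> Delta T. \<not> sat (fst T) r \<gamma>" using \<gamma> by (simp add: refutes_def)
    show "length \<gamma> \<le> length \<gamma>'" if "set \<gamma>' \<subseteq> set \<gamma>" "\<forall>r \<in> Delta T. \<not> sat (fst T) r \<gamma>'" for \<gamma>'
      using that \<gamma> by (intro shortest) (auto simp: refutes_def)
  qed
  moreover have "restrict C T \<in> A" "m_psi \<psi> (restrict C T) \<le> n"
    using restrict_mem[OF A T(1) C(1) \<open>C \<noteq> {}\<close>] atts_restrict[OF A T(1) C(1) \<open>C \<noteq> {}\<close>] C(2)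
    by (auto intro: m_psi_le)
  ultimately have "length \<gamma> \<le> g" using Gt_ge G order_trans by blast
  moreover have "psiw \<psi> \<gamma> \<le> length \<gamma> * n"
    unfolding psiw_def using psi_le_length_mult[OF _, of \<psi> "map fst \<gamma>" n] psi letters(1) C(2) by auto
  ultimately have "psiw \<psi> \<gamma> \<le> g * n" by (meson le_trans mult_le_mono1)
  with letters \<gamma> show ?thesis by (auto simp: refutes_def)
qed

lemma double_Suc_power_le:
  fixes K z :: nat
  assumes "1 \<le> K" "1 \<le> z"
  shows "2 * (K + 1) ^ z \<le> (4 * K) ^ z"
proof -
  have "(2::nat) ^ 1 \<le> 2 ^ z" by (rule power_increasing[OF assms(2)]) simp
  moreover have "(K + 1) ^ z \<le> (2 * K) ^ z" using assms(1) by (intro power_mono) auto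
  ultimately have "2 * (K + 1) ^ z \<le> 2 ^ z * (2 * K) ^ z" by (intro mult_mono) simp_all
  also have "\<dots> = (2 * (2 * K)) ^ z" by (rule power_mult_distrib[symmetric])
  finally show ?thesis by simp
qed

lemma least_exp_bound:
  fixes N K M z :: nat
  assumes N: "1 \<le> N" "N \<le> (K + 1) ^ z" and M: "K \<le> M" "1 \<le> M"
  shows "real (LEAST k. N \<le> 2 ^ k) \<le> real z * log 2 (4 * real M)"
proof -
  define k where "k = (LEAST k. N \<le> 2 ^ k)"
  show ?thesis
  proof (cases "k = 0")
    case True
    then show ?thesis using M(2) by (simp add: k_def)
  next
    case False
    have "\<not> N \<le> 2 ^ (k - 1)"
    proof
      assume "N \<le> 2 ^ (k - 1)"
      then have "k \<le> k - 1" unfolding k_def by (rule Least_le)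
      with False show False by simp
    qed
    then have lt: "2 ^ (k - 1) < N" by simp
    then have k: "2 ^ k \<le> 2 * N" using False by (cases k) auto
    have "(1::nat) \<le> 2 ^ (k - 1)" by simp
    then have "2 \<le> N" using lt by linarith
    have z: "1 \<le> z" using N(2) \<open>2 \<le> N\<close> by (cases z) auto
    have K: "1 \<le> K" using N(2) \<open>2 \<le> N\<close> by (cases K) auto
    have "2 * (K + 1) ^ z \<le> (4 * K) ^ z" by (rule double_Suc_power_le[OF K z])
    also have "\<dots> \<le> (4 * M) ^ z" using M(1) by (intro power_mono) auto
    finally have "2 ^ k \<le> (4 * M) ^ z" using k N(2) by linarith
    then have "real (2 ^ k) \<le> real ((4 * M) ^ z)" by (simp only: of_nat_le_iff)
    then have "2 ^ k \<le> (4 * real M) ^ z" by simp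
    then have "log 2 (2 ^ k) \<le> log 2 ((4 * real M) ^ z)" using M(2) by (subst log_le_cancel_iff) auto
    also have "\<dots> = real z * log 2 (4 * real M)" using M(2) by (intro log_nat_power) simp
    finally show ?thesis by (simp add: k_def)
  qed
qed

lemma cover_atts_cheap:
  assumes "bounded_cm \<psi>" "\<And>\<alpha>. \<alpha> \<in> U \<Longrightarrow> psiw \<psi> \<alpha> \<le> n" "f \<in> (\<Union>\<alpha> \<in> U. fst ` set \<alpha>)"
  shows "\<psi> [f] \<le> n"
proof -
  obtain \<alpha> where "\<alpha> \<in> U" "f \<in> set (map fst \<alpha>)" using assms(3) by auto
  then show ?thesis
    using psi_singleton_le[of \<psi>] bounded_cm_partially_bounded[OF assms(1)] assms(2) order_trans
    unfolding psiw_def by blast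
qed

lemma halving_from_irr_cover:
  assumes A: "closed_class A" and psi: "bounded_cm \<psi>" and T: "T \<in> A" "\<not> is_empty T"
    and U: "irr_psi_cover \<psi> T n U" "\<And>\<alpha>. \<alpha> \<in> U \<Longrightarrow> PiT (sub T \<alpha>) \<noteq> {}"
    and G: "\<And>Q. Q \<in> A \<Longrightarrow> m_psi \<psi> Q \<le> n \<Longrightarrow> Gt Q \<le> g"
  shows "halving T \<psi> (\<Union>\<alpha> \<in> U. fst ` set \<alpha>) U (max n (n * g))"
proof -
  let ?C = "\<Union>\<alpha> \<in> U. fst ` set \<alpha>"
  have cover: "U \<subseteq> {\<alpha> \<in> words T. psiw \<psi> \<alpha> \<le> n}" "(\<Union>\<alpha> \<in> U. Delta (sub T \<alpha>)) = Delta T"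
    using U(1) by (auto simp: irr_psi_cover_def psi_cover_def)
  have C: "?C \<subseteq> atts T" using cover(1) by (auto simp: words_def)
  have cost: "\<psi> [f] \<le> n" if "f \<in> ?C" for f
    using cover_atts_cheap[OF psi _ that] cover(1) by blast
  show ?thesis
  proof
    show "\<And>\<alpha>. \<alpha> \<in> U \<Longrightarrow> fst ` set \<alpha> \<subseteq> ?C" by blast
    show "psiw \<psi> \<alpha> \<le> max n (n * g)" if "\<alpha> \<in> U" for \<alpha> using that cover(1) by auto
    show "\<exists>\<alpha> \<in> U. sat (fst T) r \<alpha>" if "r \<in> Delta T" for r
      using that cover(2) by (auto simp: Delta_sub)
    fix s assume "s \<subseteq> ?C" "s \<notin> pattern ?C (fst T) ` Delta T"
    from refuting_word_exists[OF A psi T C cost G this] obtain \<gamma> where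
      "fst ` set \<gamma> \<subseteq> ?C" "\<forall>x \<in> set \<gamma>. snd x = (fst x \<in> s)" "psiw \<psi> \<gamma> \<le> g * n"
      "\<forall>r \<in> Delta T. \<not> sat (fst T) r \<gamma>"
      by blast
    moreover have "g * n \<le> max n (n * g)" by (simp only: mult.commute[of g n] max.cobounded2)
    ultimately show "\<exists>\<gamma>. fst ` set \<gamma> \<subseteq> ?C \<and> (\<forall>x \<in> set \<gamma>. snd x = (fst x \<in> s))
        \<and> psiw \<psi> \<gamma> \<le> max n (n * g) \<and> (\<forall>r \<in> Delta T. \<not> sat (fst T) r \<gamma>)"
      by (intro exI[of _ \<gamma>]) simp
  qed (use psi U(2) in auto)
qed

lemma psi_d_le_bound:
  assumes A: "closed_class A" and psi: "bounded_cm \<psi>" and n: "n \<noteq> 0"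
    and T: "T \<in> A" "psi_a \<psi> T \<le> n"
    and Z: "\<And>Q. Q \<in> A \<Longrightarrow> m_psi \<psi> Q \<le> n \<Longrightarrow> Zt Q \<le> z"
    and G: "\<And>Q. Q \<in> A \<Longrightarrow> m_psi \<psi> Q \<le> n \<Longrightarrow> Gt Q \<le> g"
    and L: "\<And>Q. Q \<in> A \<Longrightarrow> l_psi \<psi> Q n \<le> l" and l: "1 \<le> l"
  shows "real (psi_d \<psi> T) \<le> real (max n (n * g)) * real z * log 2 (4 * real n * real l)"
proof (cases "is_empty T")
  case True
  have "1 \<le> 4 * real n * real l" using n l by (simp add: mult_ge1_I)
  then have "0 \<le> log 2 (4 * real n * real l)" by (subst zero_le_log_cancel_iff) linarith+
  with True show ?thesis by (simp add: psi_d_def)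
next
  case False
  obtain U where U: "irr_psi_cover \<psi> T n U" "\<And>\<alpha>. \<alpha> \<in> U \<Longrightarrow> PiT (sub T \<alpha>) \<noteq> {}"
    using irr_cover_from_nd_tree[OF closed_class_wf[OF A T(1)] False T(2)] by blast
  define C where "C = (\<Union>\<alpha> \<in> U. fst ` set \<alpha>)"
  interpret halving T \<psi> C U "max n (n * g)"
    unfolding C_def by (rule halving_from_irr_cover[OF A psi T(1) False U G])
  have cover: "finite U" "U \<subseteq> {\<alpha> \<in> words T. psiw \<psi> \<alpha> \<le> n}"
    using U(1) by (auto simp: irr_psi_cover_def psi_cover_def)
  have C: "C \<subseteq> atts T" using cover(2) by (auto simp: C_def words_def)
  have "card C \<le> card U * n" unfolding C_def using card_cover_atts_le[OF psi cover(1)] cover(2) by blast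
  also have "\<dots> \<le> n * l" using l_psi_ge[OF psi False U(1)] L[OF T(1)] by simp
  finally have card_C: "card C \<le> n * l" .
  define N where "N = card (pattern C (fst T) ` Delta T)"
  have "\<psi> [f] \<le> n" if "f \<in> C" for f
    using cover_atts_cheap[OF psi _ that[unfolded C_def]] cover(2) by blast
  then have "N \<le> (card C + 1) ^ z" unfolding N_def by (rule card_patterns_le[OF A T(1) C _ Z])
  moreover have "1 \<le> N" using False by (auto simp: N_def is_empty_iff Suc_le_eq card_gt_0_iff)
  ultimately have "real (LEAST k. N \<le> 2 ^ k) \<le> real z * log 2 (4 * real (n * l))"
    using card_C n l by (intro least_exp_bound) auto
  then have "real (LEAST k. N \<le> 2 ^ k) * real (max n (n * g))
      \<le> real z * log 2 (4 * real n * real l) * real (max n (n * g))"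
    by (intro mult_right_mono) (simp_all add: mult.assoc)
  moreover have "psi_d \<psi> T \<le> (LEAST k. N \<le> 2 ^ k) * max n (n * g)"
  proof (rule psi_d_le_halving[OF C])
    show "card (pattern C (fst T) ` Delta T) \<le> 2 ^ (LEAST k. N \<le> 2 ^ k)"
      unfolding N_def[symmetric] by (rule LeastI[of _ N]) (simp add: less_imp_le)
  qed
  then have "real (psi_d \<psi> T) \<le> real (LEAST k. N \<le> 2 ^ k) * real (max n (n * g))"
    by (metis of_nat_le_iff of_nat_mult)
  ultimately show ?thesis by (simp add: mult_ac)
qed

lemma psi_d_bounded_if_H_class:
  assumes "H_class \<psi> A k \<noteq> None"
  obtains B where "\<And>T. T \<in> A \<Longrightarrow> psi_a \<psi> T \<le> k \<Longrightarrow> psi_d \<psi> T \<le> B"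
proof -
  have "finite (psi_d \<psi> ` {T \<in> A. psi_a \<psi> T \<le> k})"
    using assms by (simp add: H_class_def max_if_finite_def split: if_splits)
  then show thesis using that by (auto simp: finite_nat_set_iff_bounded_le)
qed

lemma finite_if_exp_psi_d_witness:
  assumes "H_class \<psi> A k \<noteq> None" "\<And>x. x \<in> S \<Longrightarrow> \<exists>T \<in> A. psi_a \<psi> T \<le> k \<and> x \<le> 2 ^ psi_d \<psi> T"
  shows "finite (S :: nat set)"
proof -
  obtain B where B: "\<And>T. T \<in> A \<Longrightarrow> psi_a \<psi> T \<le> k \<Longrightarrow> psi_d \<psi> T \<le> B"
    using psi_d_bounded_if_H_class[OF assms(1)] by blast
  have "x \<le> 2 ^ B" if "x \<in> S" for x
    using assms(2)[OF that] B power_increasing[of _ B "2::nat"] order_trans by fastforce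
  then show ?thesis by (auto simp: finite_nat_set_iff_bounded_le)
qed

lemma finite_Gt_image:
  assumes A: "closed_class A" and psi: "bounded_cm \<psi>" and H: "\<forall>k. H_class \<psi> A k \<noteq> None"
  shows "finite (Gt ` A_psi \<psi> A n)"
proof -
  have "finite {length \<alpha> | Q \<alpha>. Q \<in> A_psi \<psi> A n \<and> irr_annihilating Q \<alpha>}"
    by (rule finite_if_exp_psi_d_witness[of \<psi> A n])
      (use H irr_annihilating_length_le_exp_psi_d[OF A psi] in \<open>auto simp: A_psi_def\<close>)
  then obtain B where B: "\<forall>x \<in> {length \<alpha> | Q \<alpha>. Q \<in> A_psi \<psi> A n \<and> irr_annihilating Q \<alpha>}. x \<le> B"
    using finite_nat_set_iff_bounded_le by blast
  have "Gt Q \<le> B" if "Q \<in> A_psi \<psi> A n" for Q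
    by (rule Gt_le) (use B that in blast)
  then have "Gt ` A_psi \<psi> A n \<subseteq> {..B}" by auto
  then show ?thesis by (rule finite_subset) simp
qed

lemma finite_l_psi_image:
  assumes A: "closed_class A" and psi: "bounded_cm \<psi>" and H: "\<forall>k. H_class \<psi> A k \<noteq> None"
  shows "finite ((\<lambda>T. l_psi \<psi> T n) ` A)"
proof -
  have "finite {card U | T U. T \<in> A \<and> irr_psi_cover \<psi> T n U}"
    by (rule finite_if_exp_psi_d_witness[of \<psi> A n])
      (use H irr_psi_cover_card_le_exp_psi_d[OF A psi] in auto)
  then obtain B where B: "\<forall>x \<in> {card U | T U. T \<in> A \<and> irr_psi_cover \<psi> T n U}. x \<le> B"
    using finite_nat_set_iff_bounded_le by blast
  have "l_psi \<psi> T n \<le> B" if "T \<in> A" for T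
    by (rule l_psi_le[OF psi]) (use B that in blast)
  then have "(\<lambda>T. l_psi \<psi> T n) ` A \<subseteq> {..B}" by auto
  then show ?thesis by (rule finite_subset) simp
qed

lemma finite_Zt_image:
  assumes A: "closed_class A" and psi: "bounded_cm \<psi>" and H: "\<forall>k. H_class \<psi> A k \<noteq> None"
  shows "finite (Zt ` A_psi \<psi> A n)"
proof -
  have "finite {card (atts Q) - 1 | Q. Q \<in> A_psi \<psi> A n \<and> complete_table Q \<and> 2 \<le> card (atts Q)}"
    by (rule finite_if_exp_psi_d_witness[of \<psi> A "2 * n"])
      (use H complete_table_card_atts_le_exp_psi_d[OF A psi] in \<open>auto simp: A_psi_def\<close>)
  then obtain B where
    "\<forall>x \<in> {card (atts Q) - 1 | Q. Q \<in> A_psi \<psi> A n \<and> complete_table Q \<and> 2 \<le> card (atts Q)}. x \<le> B"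
    using finite_nat_set_iff_bounded_le by blast
  then have B: "card (atts Q) - 1 \<le> B"
    if "Q \<in> A_psi \<psi> A n" "complete_table Q" "2 \<le> card (atts Q)" for Q
    using that by blast
  have "Zt T \<le> Suc B" if T: "T \<in> A_psi \<psi> A n" for T
  proof -
    consider "Zt T = 0" | Q where "Q \<in> tclosure T" "complete_table Q" "Zt T = card (atts Q)"
      using Zt_cases[of T] by (elim disjE bexE conjE) auto
    then show ?thesis
    proof cases
      case (2 Q)
      have "T \<in> A" using T by (simp add: A_psi_def)
      then have "Q \<in> A" using 2(1) closed_class_tclosure[OF A] by blast
      moreover have "m_psi \<psi> Q \<le> n"
        using atts_tclosure[OF 2(1)] T m_psi_ge[of _ T \<psi>] by (intro m_psi_le) (force simp: A_psi_def)
      ultimately show ?thesis using B[of Q] 2(2,3) by (cases "2 \<le> card (atts Q)") (auto simp: A_psi_def)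
    qed simp
  qed
  then have "Zt ` A_psi \<psi> A n \<subseteq> {..Suc B}" by auto
  then show ?thesis by (rule finite_subset) simp
qed

lemma max_if_finite_Max: "finite S \<Longrightarrow> max_if_finite S = Some (Max S)"
  by (simp add: max_if_finite_def)

theorem lemma16:
  fixes A :: "dtable set" and \<psi> :: "nat list \<Rightarrow> nat" and n :: nat
  assumes "closed_class A" and "nontrivial A" and "bounded_cm \<psi>"
    and "\<forall>k. H_class \<psi> A k \<noteq> None"
    and "n \<noteq> 0"
  shows "\<exists>z g l h. Z_class \<psi> A n = Some z \<and> G_class \<psi> A n = Some g
           \<and> L_class \<psi> A n = Some l \<and> H_class \<psi> A n = Some h
           \<and> real h \<le> real (max n (n * g)) * real z * log 2 (4 * real n * real l)"
proof -
  note A = assms(1) and psi = assms(3) and H = assms(4)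
  define z g l where "z = Max (Zt ` A_psi \<psi> A n)" and "g = Max (Gt ` A_psi \<psi> A n)"
    and "l = Max ((\<lambda>T. l_psi \<psi> T n) ` A)"
  note finite = finite_Zt_image[OF A psi H] finite_Gt_image[OF A psi H] finite_l_psi_image[OF A psi H]
  have finite_H: "finite (psi_d \<psi> ` {T \<in> A. psi_a \<psi> T \<le> n})"
    using H by (auto simp: H_class_def max_if_finite_def split: if_splits)
  obtain T0 where T0: "T0 \<in> A" "\<not> is_empty T0" using assms(2) by (auto simp: nontrivial_def)
  have "1 \<le> l_psi \<psi> T0 n" using l_psi_ge[OF psi T0(2) irr_psi_cover_Nil[OF psi T0(2)]] by simp
  also have "\<dots> \<le> l" unfolding l_def by (rule Max_ge[OF finite(3)]) (use T0(1) in blast)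
  finally have "1 \<le> l" .
  have "Lam \<in> {T \<in> A. psi_a \<psi> T \<le> n}" using Lam_mem_closed_class[OF A] by simp
  then obtain T where T: "T \<in> A" "psi_a \<psi> T \<le> n" "Max (psi_d \<psi> ` {T \<in> A. psi_a \<psi> T \<le> n}) = psi_d \<psi> T"
    using Max_in[OF finite_H] by blast
  have "real (psi_d \<psi> T) \<le> real (max n (n * g)) * real z * log 2 (4 * real n * real l)"
    by (rule psi_d_le_bound[OF A psi assms(5) T(1,2) _ _ _ \<open>1 \<le> l\<close>])
      (use finite in \<open>auto simp: z_def g_def l_def A_psi_def intro!: Max_ge\<close>)
  then show ?thesis
    using T(3) finite finite_H unfolding Z_class_def G_class_def L_class_def H_class_def z_def g_def l_def
    by (auto simp: max_if_finite_Max)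
qed

end
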